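(* Let $G=(V,E)$ be a graph, $v\in V$, $S_v$ the partial star product of $v$, let $\varphi_1,\dots,\varphi_k$ be the equivalence classes of $\mathfrak d_v^*$ that contain at least one edge of $E_v$, and let $H=\Box_{i=1}^k\mathbb S_i$ where $\mathbb S_i$ is the star factor of $\varphi_i$. Then: (1) $S_v$ is isomorphic to the induced subgraph $\langle N_2^H[\bar v]\rangle$, where $\bar v=(v,\dots,v)$ is the vertex of $H$ all of whose coordinates are the star-centers; in particular $S_v$ is an isometric subgraph of $H$. More precisely, there is an isomorphism $\gamma$ from $S_v$ onto $\langle N_2^H[\bar v]\rangle$ with $\gamma(v)=\bar v$ and $\gamma(u)$ equal to the vertex with $i$-th coordinate $u$ and all other coordinates $v$ for every $u\in N_{\varphi_i}(v)$, and $\gamma$ is an isometric embedding of $S_v$ into $H$. (2) Identifying $S_v$ with its image under $\gamma$, one has $\mathfrak d_{|S_v}\subseteq\delta(H)^*\subseteq\sigma(H)$. (3) The product relation $\sigma(H)$ has the same number of equivalence classes as $\mathfrak d_{|S_v}$.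
   Context: All graphs are finite, simple and undirected. For $G=(V,E)$ and $v\in V$, $E_v$ is the set of edges incident to $v$. For two distinct adjacent edges $e=(v,u)$, $f=(v,w)$, a square spanned by $e$ and $f$ is a $4$-cycle $v,u,x,w,v$ with $x\notin\{v,u,w\}$ ($x$ its top vertex); it is chordless if neither $(u,w)$ nor $(v,x)$ is an edge. In a chordless square $v,u,x,w$, $(x,w)$ is opposite to $(v,u)$ and $(x,u)$ is opposite to $(v,w)$ (and vice versa). For any graph $X$, the relation $\delta(X)$ on $E(X)$: $(e,f)\in\delta(X)$ iff (i) $e,f$ are distinct adjacent edges and it is not the case that $e$ and $f$ span exactly one square and that square is chordless; or (ii) $e,f$ are opposite edges of a chordless square; or (iii) $e=f$. $R^*$ denotes the transitive closure of a relation $R$. Define $\mathfrak d_v=((E_v\times E)\cup(E\times E_v))\cap\delta(G)$ and $\mathfrak d_v^*$ the finest equivalence relation on $E$ containing $\mathfrak d_v$. Let $F_v\subseteq E\setminus E_v$ be the set of edges that are the edges not incident to $v$ of some chordless square spanned by two edges $e,e'\in E_v$ with $(e,e')\notin\mathfrak d_v^*$. The partial star product $S_v$ is the subgraph of $G$ with edge set $E_v\cup F_v$ and vertex set the endpoints of these edges. $\mathfrak d_{|S_v}=\{(e,f)\in\mathfrak d_v^*: e,f\in E(S_v)\}$. For an equivalence class $\varphi$ of $\mathfrak d_v^*$, $N_\varphi(v)=\{u:(v,u)\in\varphi\}$ and $N_\varphi[v]=N_\varphi(v)\cup\{v\}$; the star factor of $\varphi$ is the graph with vertex set $N_\varphi[v]$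 and edge set $\{(v,u):u\in N_\varphi(v)\}$ (a star with center $v$). Cartesian product $\Box$: vertex set is the Cartesian product of vertex sets, two vertices adjacent iff they differ in exactly one coordinate and those coordinates are adjacent in the corresponding factor. $N_2^H[x]=\{y: d_H(x,y)\le2\}$. An isometric embedding is an injective map preserving distances. Every connected graph has a unique decomposition into Cartesian prime factors (up to order and isomorphism); the product relation $\sigma(H)$ on $E(H)$ relates two edges iff their endpoints differ in the coordinate of the same prime factor with respect to the prime factor decomposition of $H$. *)

theory Defs
  imports Main "HOL-Library.FuncSet" "HOL-Library.Extended_Nat"
begin

type_synonym 'a graph = "'a set \<times> 'a set set"

abbreviation verts :: "'a graph \<Rightarrow> 'a set" where "verts G \<equiv> fst G"
abbreviation edges :: "'a graph \<Rightarrow> 'a set set" where "edges G \<equiv> snd G"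

definition simple_graph :: "'a graph \<Rightarrow> bool" where
  "simple_graph G \<longleftrightarrow> finite (verts G) \<and>
     (\<forall>e\<in>edges G. \<exists>x y. x \<noteq> y \<and> x \<in> verts G \<and> y \<in> verts G \<and> e = {x, y})"

definition adj :: "'a graph \<Rightarrow> 'a \<Rightarrow> 'a \<Rightarrow> bool" where
  "adj G x y \<longleftrightarrow> x \<noteq> y \<and> {x, y} \<in> edges G"

definition inc_edges :: "'a graph \<Rightarrow> 'a \<Rightarrow> 'a set set" where
  "inc_edges G v = {e \<in> edges G. v \<in> e}"

definition sq_tops :: "'a graph \<Rightarrow> 'a \<Rightarrow> 'a \<Rightarrow> 'a \<Rightarrow> 'a set" where
  "sq_tops G v u w = {x. x \<notin> {v, u, w} \<and> adj G u x \<and> adj G x w}"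

definition chordless_sq :: "'a graph \<Rightarrow> 'a \<Rightarrow> 'a \<Rightarrow> 'a \<Rightarrow> 'a \<Rightarrow> bool" where
  "chordless_sq G v u x w \<longleftrightarrow> adj G v u \<and> adj G u x \<and> adj G x w \<and> adj G w v \<and>
     distinct [v, u, x, w] \<and> \<not> adj G u w \<and> \<not> adj G v x"

definition opposite :: "'a graph \<Rightarrow> 'a set \<Rightarrow> 'a set \<Rightarrow> bool" where
  "opposite G e f \<longleftrightarrow> (\<exists>v u x w. chordless_sq G v u x w \<and>
     ((e = {v, u} \<and> f = {x, w}) \<or> (e = {x, w} \<and> f = {v, u}) \<or>
      (e = {v, w} \<and> f = {x, u}) \<or> (e = {x, u} \<and> f = {v, w})))"

definition delta :: "'a graph \<Rightarrow> ('a set \<times> 'a set) set" where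
  "delta G = {(e, f). e \<in> edges G \<and> f \<in> edges G \<and>
     ((e \<noteq> f \<and> (\<exists>v u w. e = {v, u} \<and> f = {v, w} \<and> adj G v u \<and> adj G v w \<and>
          \<not> (card (sq_tops G v u w) = 1 \<and> (\<forall>x\<in>sq_tops G v u w. chordless_sq G v u x w))))
      \<or> opposite G e f \<or> e = f)}"

definition d_v :: "'a graph \<Rightarrow> 'a \<Rightarrow> ('a set \<times> 'a set) set" where
  "d_v G v = ((inc_edges G v \<times> edges G) \<union> (edges G \<times> inc_edges G v)) \<inter> delta G"

definition d_v_star :: "'a graph \<Rightarrow> 'a \<Rightarrow> ('a set \<times> 'a set) set" where
  "d_v_star G v = \<Inter> {R. equiv (edges G) R \<and> d_v G v \<subseteq> R}"

definition F_v :: "'a graph \<Rightarrow> 'a \<Rightarrow> 'a set set" where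
  "F_v G v = {f. \<exists>u x w. chordless_sq G v u x w \<and> ({v, u}, {v, w}) \<notin> d_v_star G v \<and>
                 (f = {u, x} \<or> f = {x, w})}"

definition partial_star :: "'a graph \<Rightarrow> 'a \<Rightarrow> 'a graph" where
  "partial_star G v = ({v} \<union> \<Union> (inc_edges G v \<union> F_v G v), inc_edges G v \<union> F_v G v)"

definition d_restr :: "'a graph \<Rightarrow> 'a \<Rightarrow> ('a set \<times> 'a set) set" where
  "d_restr G v = {(e, f) \<in> d_v_star G v. e \<in> edges (partial_star G v) \<and> f \<in> edges (partial_star G v)}"

definition star_classes :: "'a graph \<Rightarrow> 'a \<Rightarrow> 'a set set set" where
  "star_classes G v = {\<phi> \<in> edges G // d_v_star G v. \<phi> \<inter> inc_edges G v \<noteq> {}}"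

definition N_phi :: "'a set set \<Rightarrow> 'a \<Rightarrow> 'a set" where
  "N_phi \<phi> v = {u. {v, u} \<in> \<phi>}"

definition star_factor :: "'a set set \<Rightarrow> 'a \<Rightarrow> 'a graph" where
  "star_factor \<phi> v = (insert v (N_phi \<phi> v), {{v, u} | u. u \<in> N_phi \<phi> v})"

definition cart_prod :: "'i set \<Rightarrow> ('i \<Rightarrow> 'b graph) \<Rightarrow> ('i \<Rightarrow> 'b) graph" where
  "cart_prod I G = (PiE I (\<lambda>i. verts (G i)),
     {{f, g} | f g. f \<in> PiE I (\<lambda>i. verts (G i)) \<and> g \<in> PiE I (\<lambda>i. verts (G i)) \<and>
        (\<exists>i\<in>I. adj (G i) (f i) (g i) \<and> (\<forall>j\<in>I. j \<noteq> i \<longrightarrow> f j = g j))})"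

definition walk :: "'a graph \<Rightarrow> 'a list \<Rightarrow> bool" where
  "walk G p \<longleftrightarrow> p \<noteq> [] \<and> set p \<subseteq> verts G \<and> (\<forall>i < length p - 1. adj G (p ! i) (p ! Suc i))"

definition dist :: "'a graph \<Rightarrow> 'a \<Rightarrow> 'a \<Rightarrow> enat" where
  "dist G x y = (INF p \<in> {p. walk G p \<and> hd p = x \<and> last p = y}. enat (length p - 1))"

definition connected_graph :: "'a graph \<Rightarrow> bool" where
  "connected_graph G \<longleftrightarrow> (\<forall>x\<in>verts G. \<forall>y\<in>verts G. dist G x y \<noteq> \<infinity>)"

definition induced :: "'a graph \<Rightarrow> 'a set \<Rightarrow> 'a graph" where
  "induced G S = (S, {e \<in> edges G. e \<subseteq> S})"

definition N2 :: "'a graph \<Rightarrow> 'a \<Rightarrow> 'a set" where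
  "N2 H x = {y \<in> verts H. dist H x y \<le> 2}"

definition graph_iso :: "('a \<Rightarrow> 'b) \<Rightarrow> 'a graph \<Rightarrow> 'b graph \<Rightarrow> bool" where
  "graph_iso f G H \<longleftrightarrow> bij_betw f (verts G) (verts H) \<and>
     (\<forall>x\<in>verts G. \<forall>y\<in>verts G. adj G x y \<longleftrightarrow> adj H (f x) (f y))"

definition isomorphic :: "'a graph \<Rightarrow> 'b graph \<Rightarrow> bool" where
  "isomorphic G H \<longleftrightarrow> (\<exists>f. graph_iso f G H)"

definition isometric_emb :: "('a \<Rightarrow> 'b) \<Rightarrow> 'a graph \<Rightarrow> 'b graph \<Rightarrow> bool" where
  "isometric_emb f G H \<longleftrightarrow> inj_on f (verts G) \<and> f ` verts G \<subseteq> verts H \<and>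
     (\<forall>x\<in>verts G. \<forall>y\<in>verts G. dist H (f x) (f y) = dist G x y)"

text \<open>Cartesian prime: nontrivial connected graph that is not isomorphic to a product of
  two nontrivial graphs. (Factors of a graph on vertex type 'b embed into 'b, so quantifying
  over 'b-graphs is no restriction.)\<close>
definition prime_graph :: "'b graph \<Rightarrow> bool" where
  "prime_graph G \<longleftrightarrow> simple_graph G \<and> card (verts G) \<ge> 2 \<and> connected_graph G \<and>
     (\<forall>G1 G2 :: 'b graph. simple_graph G1 \<and> simple_graph G2 \<and>
        isomorphic G (cart_prod {0::nat, 1} (\<lambda>i. if i = 0 then G1 else G2)) \<longrightarrow>
        card (verts G1) = 1 \<or> card (verts G2) = 1)"

definition is_PFD :: "'c graph \<Rightarrow> nat set \<Rightarrow> (nat \<Rightarrow> 'c graph) \<Rightarrow> ('c \<Rightarrow> nat \<Rightarrow> 'c) \<Rightarrow> bool" where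
  "is_PFD H I Gs \<psi> \<longleftrightarrow> finite I \<and> (\<forall>i\<in>I. prime_graph (Gs i)) \<and> graph_iso \<psi> H (cart_prod I Gs)"

definition coord_rel :: "'c graph \<Rightarrow> nat set \<Rightarrow> ('c \<Rightarrow> nat \<Rightarrow> 'c) \<Rightarrow> ('c set \<times> 'c set) set" where
  "coord_rel H I \<psi> = {(e, f). e \<in> edges H \<and> f \<in> edges H \<and>
     (\<exists>i\<in>I. (\<exists>a b. e = {a, b} \<and> \<psi> a i \<noteq> \<psi> b i) \<and> (\<exists>a b. f = {a, b} \<and> \<psi> a i \<noteq> \<psi> b i))}"

definition sigma :: "'c graph \<Rightarrow> ('c set \<times> 'c set) set" where
  "sigma H = (case (SOME (I, Gs, \<psi>). is_PFD H I Gs \<psi>) of (I, Gs, \<psi>) \<Rightarrow> coord_rel H I \<psi>)"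

end

theory Submission
  imports Defs
begin

text \<open>
  Vertices of both S_v and H are described by labels, i.e.\ sets of neighbours of v meeting every
  class of d_v^* at most once. A vertex of S_v is v, a neighbour u of v, or the unique top x of a
  chordless square v, u, x, w whose edges vu and vw lie in different classes; its label is {},
  {u} or {u, w}. A vertex of H is labelled by its coordinates different from the centre v. In
  both graphs adjacency means that the labels differ in one element, so distances are bounded
  below by the size of the symmetric difference of labels; in S_v this bound is attained because
  every label of size at most two occurs. Hence matching labels gives an isometric embedding
  gamma of S_v onto the ball of radius two around vbar.

  Each edge of S_v is delta(H)-related to the edge from vbar to gamma(u) for a neighbour u in its
  class, either directly or as the opposite edge of a chordless square, and two such base edges of
  the same class are delta(H)-related because they span no square. For any prime factorization of
  H, delta(H) relates only edges of the same coordinate: squares of a product with sides in two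
  coordinates are unique and chordless, and opposite edges of a square share their coordinate.
  So every class of d_v^* determines a coordinate, and every coordinate arises this way. Two
  distinct classes cannot share a coordinate i: the layer of H spanned by all classes of
  coordinate i would be isomorphic both to the i-th prime factor and to a nontrivial product of
  stars. Finally stars with at least one edge are prime, so a prime factorization exists.
\<close>

section \<open>Graphs, walks and products\<close>

lemma adj_commute: "adj G x y \<longleftrightarrow> adj G y x"
  unfolding adj_def by (auto simp: insert_commute)

lemma verts_cart_prod: "verts (cart_prod I Gs) = PiE I (\<lambda>i. verts (Gs i))"
  by (simp add: cart_prod_def)

lemma adj_cart_prod_iff:
  "adj (cart_prod I Gs) f g \<longleftrightarrow> f \<in> PiE I (\<lambda>i. verts (Gs i)) \<and> g \<in> PiE I (\<lambda>i. verts (Gs i)) \<and>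
     (\<exists>i\<in>I. adj (Gs i) (f i) (g i) \<and> (\<forall>j\<in>I. j \<noteq> i \<longrightarrow> f j = g j))"
proof
  assume a: "adj (cart_prod I Gs) f g"
  then have ne: "f \<noteq> g" and "{f, g} \<in> edges (cart_prod I Gs)" by (auto simp: adj_def)
  then obtain f' g' where e: "{f, g} = {f', g'}" and f': "f' \<in> PiE I (\<lambda>i. verts (Gs i))"
    and g': "g' \<in> PiE I (\<lambda>i. verts (Gs i))"
    and i: "\<exists>i\<in>I. adj (Gs i) (f' i) (g' i) \<and> (\<forall>j\<in>I. j \<noteq> i \<longrightarrow> f' j = g' j)"
    by (auto simp: cart_prod_def)
  from e have "(f = f' \<and> g = g') \<or> (f = g' \<and> g = f')" by (auto simp: doubleton_eq_iff)
  then show "f \<in> PiE I (\<lambda>i. verts (Gs i)) \<and> g \<in> PiE I (\<lambda>i. verts (Gs i)) \<and>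
     (\<exists>i\<in>I. adj (Gs i) (f i) (g i) \<and> (\<forall>j\<in>I. j \<noteq> i \<longrightarrow> f j = g j))"
    using f' g' i adj_commute by metis
next
  assume a: "f \<in> PiE I (\<lambda>i. verts (Gs i)) \<and> g \<in> PiE I (\<lambda>i. verts (Gs i)) \<and>
     (\<exists>i\<in>I. adj (Gs i) (f i) (g i) \<and> (\<forall>j\<in>I. j \<noteq> i \<longrightarrow> f j = g j))"
  then have "f \<noteq> g" by (auto simp: adj_def)
  with a show "adj (cart_prod I Gs) f g" by (auto simp: adj_def cart_prod_def)
qed

lemma walk_singleton_iff: "walk G [x] \<longleftrightarrow> x \<in> verts G"
  by (simp add: walk_def)

lemma walk_Cons_Cons_iff: "walk G (x # y # p) \<longleftrightarrow> x \<in> verts G \<and> adj G x y \<and> walk G (y # p)"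
proof -
  have "(\<forall>i < length (x # y # p) - 1. adj G ((x # y # p) ! i) ((x # y # p) ! Suc i)) \<longleftrightarrow>
        adj G x y \<and> (\<forall>i < length (y # p) - 1. adj G ((y # p) ! i) ((y # p) ! Suc i))"
    (is "?L \<longleftrightarrow> ?R")
  proof
    assume ?L then show ?R
      by (auto simp: less_Suc_eq_0_disj nth_Cons split: nat.splits)
  next
    assume r: ?R show ?L
    proof (intro allI impI)
      fix i assume "i < length (x # y # p) - 1"
      then show "adj G ((x # y # p) ! i) ((x # y # p) ! Suc i)"
        using r by (cases i) auto
    qed
  qed
  then show ?thesis by (auto simp: walk_def)
qed

lemma dist_le_walk_length:
  assumes "walk G p" "hd p = x" "last p = y"
  shows "dist G x y \<le> enat (length p - 1)"
  unfolding dist_def by (rule INF_lower) (use assms in auto)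

lemma enat_le_dist:
  assumes "\<And>p. walk G p \<Longrightarrow> hd p = x \<Longrightarrow> last p = y \<Longrightarrow> n \<le> length p - 1"
  shows "enat n \<le> dist G x y"
  unfolding dist_def by (rule INF_greatest) (use assms in auto)

lemma walk_if_dist_finite:
  assumes "dist G x y \<noteq> \<infinity>"
  shows "\<exists>p. walk G p \<and> hd p = x \<and> last p = y"
  using assms unfolding dist_def by (auto simp: top_enat_def[symmetric])

lemma walk_map_hom:
  assumes "\<And>x. x \<in> verts G \<Longrightarrow> f x \<in> verts H"
    and "\<And>x y. x \<in> verts G \<Longrightarrow> y \<in> verts G \<Longrightarrow> adj G x y \<Longrightarrow> adj H (f x) (f y)"
    and "walk G p"
  shows "walk H (map f p)"
  using assms(3)
proof (induction p rule: induct_list012)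
  case 1 then show ?case by (simp add: walk_def)
next
  case (2 x) then show ?case using assms(1) by (simp add: walk_singleton_iff)
next
  case (3 x y zs)
  then have "y \<in> verts G" by (auto simp: walk_def)
  with 3 show ?case using assms(1,2) by (auto simp: walk_Cons_Cons_iff)
qed

lemma dist_hom_le:
  assumes "\<And>x. x \<in> verts G \<Longrightarrow> f x \<in> verts H"
    and "\<And>x y. x \<in> verts G \<Longrightarrow> y \<in> verts G \<Longrightarrow> adj G x y \<Longrightarrow> adj H (f x) (f y)"
  shows "dist H (f x) (f y) \<le> dist G x y"
  unfolding dist_def[of G]
proof (rule INF_greatest)
  fix p assume "p \<in> {p. walk G p \<and> hd p = x \<and> last p = y}"
  then have w: "walk G p" "hd p = x" "last p = y" by auto
  then have "p \<noteq> []" by (auto simp: walk_def)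
  have "walk H (map f p)" by (rule walk_map_hom[OF assms w(1)])
  moreover have "hd (map f p) = f x" "last (map f p) = f y" using w \<open>p \<noteq> []\<close>
    by (auto simp: hd_map last_map)
  ultimately show "dist H (f x) (f y) \<le> enat (length p - 1)"
    using dist_le_walk_length by fastforce
qed

lemma edge_if_adj: "adj X a b \<Longrightarrow> {a, b} \<in> edges X" by (simp add: adj_def)

lemma chordless_sq_commute: "chordless_sq X a u x w \<longleftrightarrow> chordless_sq X a w x u"
  unfolding chordless_sq_def by (auto simp: adj_commute)

lemma sq_tops_commute: "sq_tops X a u w = sq_tops X a w u"
  unfolding sq_tops_def by (auto simp: adj_commute)

lemma opposite_sym: "opposite X e f \<Longrightarrow> opposite X f e"
  unfolding opposite_def by blast

lemma delta_sym: "(e, f) \<in> delta X \<Longrightarrow> (f, e) \<in> delta X"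
proof -
  assume d: "(e, f) \<in> delta X"
  then have ef: "e \<in> edges X" "f \<in> edges X" by (auto simp: delta_def)
  from d consider (a) "e \<noteq> f \<and> (\<exists>v u w. e = {v, u} \<and> f = {v, w} \<and> adj X v u \<and> adj X v w \<and>
          \<not> (card (sq_tops X v u w) = 1 \<and> (\<forall>x\<in>sq_tops X v u w. chordless_sq X v u x w)))"
    | (b) "opposite X e f" | (c) "e = f"
    unfolding delta_def by blast
  then show "(f, e) \<in> delta X"
  proof cases
    case a
    then obtain a u w where h: "e \<noteq> f" "e = {a, u}" "f = {a, w}" "adj X a u" "adj X a w"
      "\<not> (card (sq_tops X a u w) = 1 \<and> (\<forall>x\<in>sq_tops X a u w. chordless_sq X a u x w))" by blast
    have "\<not> (card (sq_tops X a w u) = 1 \<and> (\<forall>x\<in>sq_tops X a w u. chordless_sq X a w x u))"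
      using h(6) sq_tops_commute[of X a u w] chordless_sq_commute[of X a u _ w] by simp
    then show ?thesis using h ef unfolding delta_def by blast
  next
    case b then show ?thesis using ef opposite_sym unfolding delta_def by blast
  next
    case c then show ?thesis using d by simp
  qed
qed

lemma delta_refl: "e \<in> edges X \<Longrightarrow> (e, e) \<in> delta X"
  by (simp add: delta_def)
lemma delta_in_edges: "(e, f) \<in> delta G \<Longrightarrow> e \<in> edges G \<and> f \<in> edges G"
  by (auto simp: delta_def)

lemma equiv_Inter_closure:
  assumes "D \<subseteq> A \<times> A"
  shows "equiv A (\<Inter> {R. equiv A R \<and> D \<subseteq> R})" and "D \<subseteq> \<Inter> {R. equiv A R \<and> D \<subseteq> R}"
proof -
  let ?F = "{R. equiv A R \<and> D \<subseteq> R}"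
  have ne: "A \<times> A \<in> ?F" using assms by (auto simp: equiv_def refl_on_def sym_def trans_def)
  show "D \<subseteq> \<Inter> ?F" by auto
  have r: "refl_on A (\<Inter> ?F)" using ne by (auto simp: equiv_def refl_on_def)
  have s: "sym (\<Inter> ?F)" by (auto simp: equiv_def sym_def)
  have t: "trans (\<Inter> ?F)"
  proof (rule transI)
    fix x y z assume a: "(x, y) \<in> \<Inter> ?F" "(y, z) \<in> \<Inter> ?F"
    show "(x, z) \<in> \<Inter> ?F"
    proof
      fix Q assume "Q \<in> ?F"
      then have "trans Q" "(x, y) \<in> Q" "(y, z) \<in> Q" using a by (auto simp: equiv_def)
      then show "(x, z) \<in> Q" by (meson transD)
    qed
  qed
  have u: "\<Inter> ?F \<subseteq> A \<times> A" using ne by blast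
  show "equiv A (\<Inter> ?F)" using r s t u by (simp add: equiv_def)
qed

lemma restrict_eq_iff: "restrict f X = restrict g X \<longleftrightarrow> (\<forall>x\<in>X. f x = g x)"
proof
  assume eq: "restrict f X = restrict g X"
  show "\<forall>x\<in>X. f x = g x"
  proof
    fix x assume x: "x \<in> X"
    have "restrict f X x = restrict g X x" using eq by simp
    then show "f x = g x" using x by simp
  qed
next
  assume "\<forall>x\<in>X. f x = g x"
  then show "restrict f X = restrict g X" by (intro restrict_ext) blast
qed

definition add_one :: "'x set \<Rightarrow> 'x set \<Rightarrow> bool" where
  "add_one X Y \<longleftrightarrow> (\<exists>u. u \<notin> X \<and> Y = insert u X)"

lemma add_one_empty: "add_one {} {u}" by (auto simp: add_one_def)
lemma add_one_pair: "u \<noteq> w \<Longrightarrow> add_one {u} {u, w} \<and> add_one {w} {u, w}"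
  unfolding add_one_def by (metis insert_commute singletonD)

lemma card_symdiff_add_one:
  assumes "add_one X Y \<or> add_one Y X" "finite X" "finite Y" "finite Z"
  shows "card ((X - Z) \<union> (Z - X)) \<le> Suc (card ((Y - Z) \<union> (Z - Y)))"
proof -
  obtain u where u: "X \<subseteq> insert u Y" "Y \<subseteq> insert u X" using assms(1) by (auto simp: add_one_def)
  have sub: "(X - Z) \<union> (Z - X) \<subseteq> insert u ((Y - Z) \<union> (Z - Y))" using u by auto
  have f: "finite ((Y - Z) \<union> (Z - Y))" using assms by auto
  have "card ((X - Z) \<union> (Z - X)) \<le> card (insert u ((Y - Z) \<union> (Z - Y)))"
    by (rule card_mono) (use f sub in auto)
  also have "\<dots> \<le> Suc (card ((Y - Z) \<union> (Z - Y)))" using f by (simp add: card_insert_if)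
  finally show ?thesis .
qed

lemma adj_cart_prod_singleton_iff:
  "adj (cart_prod {c} F) f g \<longleftrightarrow> f \<in> PiE {c} (\<lambda>i. verts (F i)) \<and> g \<in> PiE {c} (\<lambda>i. verts (F i)) \<and>
     adj (F c) (f c) (g c)"
  unfolding adj_cart_prod_iff by auto

lemma bij_betw_regroup:
  assumes en: "bij_betw en I C"
  shows "bij_betw (\<lambda>h. \<lambda>n\<in>I. restrict h {en n}) (PiE C V) (PiE I (\<lambda>n. PiE {en n} V))"
proof -
  let ?p = "\<lambda>h. \<lambda>n\<in>I. restrict h {en n}"
  have enI: "n \<in> I \<Longrightarrow> en n \<in> C" for n using en bij_betwE by blast
  have enC: "\<phi> \<in> C \<Longrightarrow> \<exists>n\<in>I. en n = \<phi>" for \<phi> using en by (metis bij_betw_def imageE)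
  have maps: "?p h \<in> PiE I (\<lambda>n. PiE {en n} V)" if "h \<in> PiE C V" for h
    using that enI by (auto simp: PiE_iff)
  have inj: "inj_on ?p (PiE C V)"
  proof (rule inj_onI)
    fix h h' assume h: "h \<in> PiE C V" "h' \<in> PiE C V" "?p h = ?p h'"
    show "h = h'"
    proof (rule PiE_ext[OF h(1) h(2)])
      fix \<phi> assume "\<phi> \<in> C"
      then obtain n where n: "n \<in> I" "en n = \<phi>" using enC by blast
      then have "restrict h {en n} (en n) = restrict h' {en n} (en n)" using h(3) by (metis restrict_apply')
      then show "h \<phi> = h' \<phi>" using n by simp
    qed
  qed
  have surj: "PiE I (\<lambda>n. PiE {en n} V) \<subseteq> ?p ` PiE C V"
  proof
    fix g assume g: "g \<in> PiE I (\<lambda>n. PiE {en n} V)"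
    define h where "h = (\<lambda>\<phi>\<in>C. g (inv_into I en \<phi>) \<phi>)"
    have inv: "\<phi> \<in> C \<Longrightarrow> inv_into I en \<phi> \<in> I \<and> en (inv_into I en \<phi>) = \<phi>" for \<phi>
      using en by (metis bij_betw_def bij_betw_inv_into_right inv_into_into)
    have hV: "h \<in> PiE C V"
      using g inv by (fastforce simp: h_def PiE_iff)
    have "?p h = g"
    proof (rule PiE_ext[OF maps[OF hV] g])
      fix n assume n: "n \<in> I"
      have "inv_into I en (en n) = n" using en n by (simp add: bij_betw_def inv_into_f_f)
      then show "?p h n = g n"
        using g n enI by (intro PiE_ext[of _ "{en n}" V]) (auto simp: h_def PiE_iff)
    qed
    then show "g \<in> ?p ` PiE C V" using hV by blast
  qed
  have "?p ` PiE C V \<subseteq> PiE I (\<lambda>n. PiE {en n} V)" using maps by (rule image_subsetI)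
  with inj surj show ?thesis unfolding bij_betw_def by (intro conjI subset_antisym)
qed

lemma adj_regroup_iff:
  assumes en: "bij_betw en I C"
    and xy: "x \<in> PiE C (\<lambda>i. verts (F i))" "y \<in> PiE C (\<lambda>i. verts (F i))"
  shows "adj (cart_prod C F) x y \<longleftrightarrow>
    adj (cart_prod I (\<lambda>n. cart_prod {en n} F)) (\<lambda>n\<in>I. restrict x {en n}) (\<lambda>n\<in>I. restrict y {en n})"
proof -
  let ?p = "\<lambda>h. \<lambda>n\<in>I. restrict h {en n}"
  have enI: "n \<in> I \<Longrightarrow> en n \<in> C" for n using en bij_betwE by blast
  have enC: "\<phi> \<in> C \<Longrightarrow> \<exists>n\<in>I. en n = \<phi>" for \<phi> using en by (metis bij_betw_def imageE)
  have eninj: "n \<in> I \<Longrightarrow> m \<in> I \<Longrightarrow> en n = en m \<Longrightarrow> n = m" for n m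
    using en by (metis bij_betw_def inj_onD)
  have px: "?p x \<in> PiE I (\<lambda>n. verts (cart_prod {en n} F))" "?p y \<in> PiE I (\<lambda>n. verts (cart_prod {en n} F))"
    using xy enI by (auto simp: PiE_iff verts_cart_prod)
  have other_coords: "(\<forall>m\<in>I. m \<noteq> n \<longrightarrow> ?p x m = ?p y m) \<longleftrightarrow> (\<forall>\<psi>\<in>C. \<psi> \<noteq> en n \<longrightarrow> x \<psi> = y \<psi>)"
    if n: "n \<in> I" for n
  proof
    assume a: "\<forall>m\<in>I. m \<noteq> n \<longrightarrow> ?p x m = ?p y m"
    show "\<forall>\<psi>\<in>C. \<psi> \<noteq> en n \<longrightarrow> x \<psi> = y \<psi>"
    proof (intro ballI impI)
      fix \<psi> assume "\<psi> \<in> C" "\<psi> \<noteq> en n"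
      then obtain m where m: "m \<in> I" "en m = \<psi>" "m \<noteq> n" using enC by blast
      then have "restrict x {en m} = restrict y {en m}" using a by fastforce
      then have "restrict x {en m} (en m) = restrict y {en m} (en m)" by simp
      then show "x \<psi> = y \<psi>" using m by simp
    qed
  next
    assume a: "\<forall>\<psi>\<in>C. \<psi> \<noteq> en n \<longrightarrow> x \<psi> = y \<psi>"
    show "\<forall>m\<in>I. m \<noteq> n \<longrightarrow> ?p x m = ?p y m"
    proof (intro ballI impI)
      fix m assume m: "m \<in> I" "m \<noteq> n"
      then have "x (en m) = y (en m)" using a enI eninj n by blast
      then show "?p x m = ?p y m" using m(1) by (auto simp: restrict_def)
    qed
  qed
  have factor_adj: "adj (cart_prod {en n} F) (?p x n) (?p y n) \<longleftrightarrow> adj (F (en n)) (x (en n)) (y (en n))"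
    if "n \<in> I" for n
    using xy enI that by (auto simp: adj_cart_prod_singleton_iff PiE_iff)
  have "adj (cart_prod C F) x y \<longleftrightarrow>
      (\<exists>\<phi>\<in>C. adj (F \<phi>) (x \<phi>) (y \<phi>) \<and> (\<forall>\<psi>\<in>C. \<psi> \<noteq> \<phi> \<longrightarrow> x \<psi> = y \<psi>))"
    unfolding adj_cart_prod_iff using xy by blast
  also have "\<dots> \<longleftrightarrow> (\<exists>n\<in>I. adj (F (en n)) (x (en n)) (y (en n)) \<and> (\<forall>\<psi>\<in>C. \<psi> \<noteq> en n \<longrightarrow> x \<psi> = y \<psi>))"
    using enC enI by blast
  also have "\<dots> \<longleftrightarrow> (\<exists>n\<in>I. adj (cart_prod {en n} F) (?p x n) (?p y n) \<and> (\<forall>m\<in>I. m \<noteq> n \<longrightarrow> ?p x m = ?p y m))"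
    using other_coords factor_adj by auto
  also have "\<dots> \<longleftrightarrow> adj (cart_prod I (\<lambda>n. cart_prod {en n} F)) (?p x) (?p y)"
    unfolding adj_cart_prod_iff using px by blast
  finally show ?thesis .
qed

lemma graph_iso_regroup:
  assumes "bij_betw en I C"
  shows "graph_iso (\<lambda>h. \<lambda>n\<in>I. restrict h {en n}) (cart_prod C F) (cart_prod I (\<lambda>n. cart_prod {en n} F))"
  unfolding graph_iso_def
proof (intro conjI ballI)
  show "bij_betw (\<lambda>h. \<lambda>n\<in>I. restrict h {en n}) (verts (cart_prod C F)) (verts (cart_prod I (\<lambda>n. cart_prod {en n} F)))"
    using bij_betw_regroup[OF assms, of "\<lambda>i. verts (F i)"] by (simp only: verts_cart_prod)
  fix x y assume "x \<in> verts (cart_prod C F)" "y \<in> verts (cart_prod C F)"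
  then show "adj (cart_prod C F) x y =
    adj (cart_prod I (\<lambda>n. cart_prod {en n} F)) (\<lambda>n\<in>I. restrict x {en n}) (\<lambda>n\<in>I. restrict y {en n})"
    using adj_regroup_iff[OF assms] by (simp only: verts_cart_prod)
qed

lemma simple_cart_prod:
  assumes "finite I" "\<And>i. i \<in> I \<Longrightarrow> finite (verts (Gs i))"
  shows "simple_graph (cart_prod I Gs)"
  unfolding simple_graph_def
proof
  show "finite (verts (cart_prod I Gs))" using assms by (simp add: verts_cart_prod finite_PiE)
  show "\<forall>e\<in>edges (cart_prod I Gs). \<exists>x y. x \<noteq> y \<and> x \<in> verts (cart_prod I Gs) \<and> y \<in> verts (cart_prod I Gs) \<and> e = {x, y}"
  proof
    fix e assume "e \<in> edges (cart_prod I Gs)"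
    then obtain f g where fg: "e = {f, g}" "f \<in> PiE I (\<lambda>i. verts (Gs i))" "g \<in> PiE I (\<lambda>i. verts (Gs i))"
      "\<exists>i\<in>I. adj (Gs i) (f i) (g i)" by (auto simp: cart_prod_def)
    then have "f \<noteq> g" by (auto simp: adj_def)
    then show "\<exists>x y. x \<noteq> y \<and> x \<in> verts (cart_prod I Gs) \<and> y \<in> verts (cart_prod I Gs) \<and> e = {x, y}"
      using fg by (auto simp: verts_cart_prod)
  qed
qed


lemma ex_other_elem:
  assumes "c \<in> A" "card A \<noteq> 1"
  shows "\<exists>q\<in>A. q \<noteq> c"
proof (rule ccontr)
  assume "\<not> (\<exists>q\<in>A. q \<noteq> c)"
  then have "A = {c}" using assms(1) by blast
  then show False using assms(2) by simp
qed

lemma connected_graph_if_universal_vertex: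
  assumes c: "c \<in> verts Q" and to_c: "\<And>x. x \<in> verts Q \<Longrightarrow> x \<noteq> c \<Longrightarrow> adj Q x c"
  shows "connected_graph Q"
  unfolding connected_graph_def
proof (intro ballI)
  fix x y assume xy: "x \<in> verts Q" "y \<in> verts Q"
  have walk_to_c: "walk Q (if z = c then [z] else [z, c])" if "z \<in> verts Q" for z
    using that c to_c by (simp add: walk_Cons_Cons_iff walk_singleton_iff)
  have "walk Q ((if x = c then [] else [x]) @ (rev (if y = c then [y] else [y, c])))"
    using walk_to_c[OF xy(2)] to_c[OF xy(1)] xy c
    by (auto simp: walk_Cons_Cons_iff walk_singleton_iff adj_commute)
  moreover have "hd ((if x = c then [] else [x]) @ (rev (if y = c then [y] else [y, c]))) = x"
    "last ((if x = c then [] else [x]) @ (rev (if y = c then [y] else [y, c]))) = y"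
    by auto
  ultimately show "dist Q x y \<noteq> \<infinity>"
    using dist_le_walk_length by (metis enat_ord_simps(4) infinity_ileE)
qed

text \<open>A vertex of a product that differs from the image of a universal vertex in both
  coordinates cannot be adjacent to it.\<close>

lemma not_product_if_universal_vertex:
  fixes Q G1 G2 :: "'b graph"
  assumes c: "c \<in> verts Q" and to_c: "\<And>x. x \<in> verts Q \<Longrightarrow> x \<noteq> c \<Longrightarrow> adj Q x c"
    and iso: "isomorphic Q (cart_prod {0::nat, 1} (\<lambda>i. if i = 0 then G1 else G2))"
  shows "card (verts G1) = 1 \<or> card (verts G2) = 1"
proof (rule ccontr)
  assume n1: "\<not> (card (verts G1) = 1 \<or> card (verts G2) = 1)"
  let ?P2 = "cart_prod {0::nat, 1} (\<lambda>i. if i = 0 then G1 else G2)"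
  obtain \<theta> where th: "graph_iso \<theta> Q ?P2" using iso by (auto simp: isomorphic_def)
  have thb: "bij_betw \<theta> (verts Q) (verts ?P2)" using th by (simp add: graph_iso_def)
  have "\<theta> c \<in> PiE {0, 1} (\<lambda>i. verts (if i = 0 then G1 else G2))"
    using bij_betwE[OF thb] c by (simp add: verts_cart_prod)
  from PiE_mem[OF this] have c_coords: "\<theta> c 0 \<in> verts G1" "\<theta> c 1 \<in> verts G2"
    by (metis insertCI, metis insertCI zero_neq_one)
  obtain p where p: "p \<in> verts G1" "p \<noteq> \<theta> c 0" using ex_other_elem[OF c_coords(1)] n1 by blast
  obtain q where q: "q \<in> verts G2" "q \<noteq> \<theta> c 1" using ex_other_elem[OF c_coords(2)] n1 by blast
  define Z where "Z = (\<lambda>i\<in>{0::nat, 1}. if i = 0 then p else q)"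
  have "Z \<in> verts ?P2" using p q by (simp add: Z_def verts_cart_prod PiE_iff)
  then have "Z \<in> \<theta> ` verts Q" using thb by (simp add: bij_betw_def)
  then obtain z where z: "z \<in> verts Q" "\<theta> z = Z" by blast
  have "\<theta> z 0 \<noteq> \<theta> c 0" using z(2) p(2) by (simp add: Z_def)
  then have "adj Q z c" using to_c z(1) by blast
  then have "adj ?P2 Z (\<theta> c)" using th z c unfolding graph_iso_def by blast
  then obtain i where "i \<in> {0::nat, 1}" "\<forall>j\<in>{0::nat, 1}. j \<noteq> i \<longrightarrow> Z j = \<theta> c j"
    unfolding adj_cart_prod_iff by blast
  then have "Z 0 = \<theta> c 0 \<or> Z 1 = \<theta> c 1" by (cases "i = 0") auto
  then show False using p q by (simp add: Z_def)
qed

lemma prime_graph_if_universal_vertex: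
  fixes Q :: "'b graph"
  assumes "simple_graph Q" "card (verts Q) \<ge> 2" "c \<in> verts Q"
    and "\<And>x. x \<in> verts Q \<Longrightarrow> x \<noteq> c \<Longrightarrow> adj Q x c"
  shows "prime_graph Q"
  unfolding prime_graph_def
proof (intro conjI allI impI)
  show "connected_graph Q" using assms(3,4) by (rule connected_graph_if_universal_vertex)
  fix G1 G2 :: "'b graph"
  assume "simple_graph G1 \<and> simple_graph G2 \<and>
    isomorphic Q (cart_prod {0::nat, 1} (\<lambda>i. if i = 0 then G1 else G2))"
  then show "card (verts G1) = 1 \<or> card (verts G2) = 1"
    using not_product_if_universal_vertex[OF assms(3,4)] by blast
qed (use assms in auto)

section \<open>Coordinates in a graph isomorphic to a product\<close>

lemma sigma_eq_coord_rel:
  assumes "\<exists>I Gs \<psi>. is_PFD H I Gs \<psi>"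
  obtains I Gs \<psi> where "is_PFD H I Gs \<psi>" "sigma H = coord_rel H I \<psi>"
proof -
  let ?t = "SOME (I, Gs, \<psi>). is_PFD H I Gs \<psi>"
  have "case ?t of (I, Gs, \<psi>) \<Rightarrow> is_PFD H I Gs \<psi>"
    using someI_ex[of "\<lambda>(I, Gs, \<psi>). is_PFD H I Gs \<psi>"] assms by auto
  then show ?thesis using that by (cases ?t) (auto simp: sigma_def)
qed

text \<open>The last two assumptions say that Hg is a well-formed graph; graph_iso alone does not
  force them.\<close>

locale product_iso =
  fixes Hg :: "'c graph" and I :: "nat set" and Gs :: "nat \<Rightarrow> 'c graph" and \<psi> :: "'c \<Rightarrow> nat \<Rightarrow> 'c"
  assumes iso: "graph_iso \<psi> Hg (cart_prod I Gs)"
    and adj_in_verts: "adj Hg a b \<Longrightarrow> a \<in> verts Hg \<and> b \<in> verts Hg"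
    and edge_is_adj: "e \<in> edges Hg \<Longrightarrow> \<exists>a b. adj Hg a b \<and> e = {a, b}"
begin

abbreviation "P \<equiv> cart_prod I Gs"

lemma psi_bij: "bij_betw \<psi> (verts Hg) (PiE I (\<lambda>i. verts (Gs i)))"
  using iso by (simp add: graph_iso_def verts_cart_prod)

lemma psi_P: "a \<in> verts Hg \<Longrightarrow> \<psi> a \<in> PiE I (\<lambda>i. verts (Gs i))"
  using psi_bij bij_betwE by blast

lemma psi_inj: "a \<in> verts Hg \<Longrightarrow> b \<in> verts Hg \<Longrightarrow> \<psi> a = \<psi> b \<Longrightarrow> a = b"
  using psi_bij by (metis bij_betw_def inj_onD)

lemma psi_adj: "a \<in> verts Hg \<Longrightarrow> b \<in> verts Hg \<Longrightarrow> adj Hg a b \<longleftrightarrow> adj P (\<psi> a) (\<psi> b)"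
  using iso by (simp add: graph_iso_def)

lemma psi_surj: "Y \<in> PiE I (\<lambda>i. verts (Gs i)) \<Longrightarrow> \<exists>y\<in>verts Hg. \<psi> y = Y"
  using psi_bij by (metis bij_betw_def imageE)

definition edge_coord :: "'c \<Rightarrow> 'c \<Rightarrow> nat" where
  "edge_coord a b = (THE i. i \<in> I \<and> \<psi> a i \<noteq> \<psi> b i)"

lemma adj_product_coord:
  assumes "adj P X Y"
  shows "\<exists>i\<in>I. adj (Gs i) (X i) (Y i) \<and> (\<forall>j. j \<noteq> i \<longrightarrow> X j = Y j)"
proof -
  from assms obtain i where i: "i \<in> I" "adj (Gs i) (X i) (Y i)" "\<forall>j\<in>I. j \<noteq> i \<longrightarrow> X j = Y j"
    and XY: "X \<in> PiE I (\<lambda>i. verts (Gs i))" "Y \<in> PiE I (\<lambda>i. verts (Gs i))"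
    unfolding adj_cart_prod_iff by blast
  have "\<forall>j. j \<noteq> i \<longrightarrow> X j = Y j"
  proof (intro allI impI)
    fix j assume "j \<noteq> i"
    show "X j = Y j"
    proof (cases "j \<in> I")
      case True then show ?thesis using i(3) \<open>j \<noteq> i\<close> by blast
    next
      case False then show ?thesis using XY by (simp add: PiE_def extensional_def)
    qed
  qed
  then show ?thesis using i by blast
qed

lemma edge_coord_props:
  assumes "adj Hg a b"
  shows "edge_coord a b \<in> I" "\<psi> a (edge_coord a b) \<noteq> \<psi> b (edge_coord a b)" "\<And>j. j \<noteq> edge_coord a b \<Longrightarrow> \<psi> a j = \<psi> b j"
    "adj (Gs (edge_coord a b)) (\<psi> a (edge_coord a b)) (\<psi> b (edge_coord a b))"
proof -
  have ab: "a \<in> verts Hg" "b \<in> verts Hg" using adj_in_verts assms by auto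
  have "adj P (\<psi> a) (\<psi> b)" using psi_adj ab assms by simp
  from adj_product_coord[OF this] obtain i where i: "i \<in> I" "adj (Gs i) (\<psi> a i) (\<psi> b i)" "\<forall>j. j \<noteq> i \<longrightarrow> \<psi> a j = \<psi> b j"
    by blast
  have ne: "\<psi> a i \<noteq> \<psi> b i" using i(2) by (auto simp: adj_def)
  have "edge_coord a b = i" unfolding edge_coord_def
    by (rule the_equality) (use i ne in auto)
  then show "edge_coord a b \<in> I" "\<psi> a (edge_coord a b) \<noteq> \<psi> b (edge_coord a b)" "\<And>j. j \<noteq> edge_coord a b \<Longrightarrow> \<psi> a j = \<psi> b j"
    "adj (Gs (edge_coord a b)) (\<psi> a (edge_coord a b)) (\<psi> b (edge_coord a b))" using i ne by auto
qed

lemma edge_coord_commute: "adj Hg a b \<Longrightarrow> edge_coord a b = edge_coord b a"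
  using edge_coord_props adj_commute by metis

lemma differs_in_coord_iff:
  assumes "adj Hg a b" "i \<in> I"
  shows "(\<exists>a' b'. {a, b} = {a', b'} \<and> \<psi> a' i \<noteq> \<psi> b' i) \<longleftrightarrow> i = edge_coord a b"
proof
  assume "\<exists>a' b'. {a, b} = {a', b'} \<and> \<psi> a' i \<noteq> \<psi> b' i"
  then obtain a' b' where "{a, b} = {a', b'}" "\<psi> a' i \<noteq> \<psi> b' i" by blast
  then have "\<psi> a i \<noteq> \<psi> b i" by (auto simp: doubleton_eq_iff)
  then show "i = edge_coord a b" using edge_coord_props(3)[OF assms(1)] by metis
next
  assume "i = edge_coord a b"
  then show "\<exists>a' b'. {a, b} = {a', b'} \<and> \<psi> a' i \<noteq> \<psi> b' i" using edge_coord_props(2)[OF assms(1)] by blast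
qed

lemma coord_rel_iff:
  assumes "adj Hg a b" "adj Hg c d"
  shows "({a, b}, {c, d}) \<in> coord_rel Hg I \<psi> \<longleftrightarrow> edge_coord a b = edge_coord c d"
proof -
  have "{a, b} \<in> edges Hg" "{c, d} \<in> edges Hg" using assms by (auto simp: adj_def)
  then show ?thesis unfolding coord_rel_def using differs_in_coord_iff[OF assms(1)] differs_in_coord_iff[OF assms(2)]
    edge_coord_props(1)[OF assms(1)] by auto
qed

lemma coord_rel_trans: "trans (coord_rel Hg I \<psi>)"
proof (rule transI)
  fix e f g assume ef: "(e, f) \<in> coord_rel Hg I \<psi>" and fg: "(f, g) \<in> coord_rel Hg I \<psi>"
  have E: "e \<in> edges Hg" "f \<in> edges Hg" "g \<in> edges Hg" using ef fg by (auto simp: coord_rel_def)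
  obtain a b where ab: "adj Hg a b" "e = {a, b}" using edge_is_adj E(1) by blast
  obtain c d where cd: "adj Hg c d" "f = {c, d}" using edge_is_adj E(2) by blast
  obtain x y where xy: "adj Hg x y" "g = {x, y}" using edge_is_adj E(3) by blast
  show "(e, g) \<in> coord_rel Hg I \<psi>"
    using ef fg coord_rel_iff ab cd xy by metis
qed

lemma four_cycle_edge_coord:
  assumes "adj Hg a b" "adj Hg b c" "adj Hg c d" "adj Hg d a" "a \<noteq> c" "b \<noteq> d"
  shows "edge_coord a b = edge_coord c d"
proof (rule ccontr)
  assume ne: "edge_coord a b \<noteq> edge_coord c d"
  define k1 k2 k3 k4 where "k1 = edge_coord a b" "k2 = edge_coord b c" "k3 = edge_coord c d" "k4 = edge_coord d a"
  note p1 = edge_coord_props[OF assms(1), folded k1_k2_k3_k4_def(1)]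
  note p2 = edge_coord_props[OF assms(2), folded k1_k2_k3_k4_def(2)]
  note p3 = edge_coord_props[OF assms(3), folded k1_k2_k3_k4_def(3)]
  note p4 = edge_coord_props[OF assms(4), folded k1_k2_k3_k4_def(4)]
  have ne': "k1 \<noteq> k3" using ne k1_k2_k3_k4_def by simp
  have V: "a \<in> verts Hg" "b \<in> verts Hg" "c \<in> verts Hg" "d \<in> verts Hg" using adj_in_verts assms by auto
  have c1: "k2 = k1 \<or> k4 = k1"
  proof (rule ccontr)
    assume "\<not> (k2 = k1 \<or> k4 = k1)"
    then have "\<psi> b k1 = \<psi> c k1" "\<psi> c k1 = \<psi> d k1" "\<psi> d k1 = \<psi> a k1" using p2(3) p3(3) p4(3) ne' by metis+
    then show False using p1(2) by simp
  qed
  have c3: "k2 = k3 \<or> k4 = k3"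
  proof (rule ccontr)
    assume "\<not> (k2 = k3 \<or> k4 = k3)"
    then have "\<psi> d k3 = \<psi> a k3" "\<psi> a k3 = \<psi> b k3" "\<psi> b k3 = \<psi> c k3" using p4(3) p1(3) p2(3) ne' by metis+
    then show False using p3(2) by simp
  qed
  show False
  proof (cases "k2 = k1")
    case True
    then have "k4 = k3" using c3 ne' by simp
    have "\<psi> a = \<psi> c"
    proof
      fix j show "\<psi> a j = \<psi> c j"
        using p1(3) p2(3) p3(3) p4(3) True \<open>k4 = k3\<close> ne' by (cases "j = k1") metis+
    qed
    then show False using psi_inj V assms(5) by blast
  next
    case False
    then have "k4 = k1" using c1 by simp
    then have "k2 = k3" using c3 ne' by auto
    have "\<psi> b = \<psi> d"
    proof
      fix j show "\<psi> b j = \<psi> d j"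
        using p1(3) p2(3) p3(3) p4(3) \<open>k4 = k1\<close> \<open>k2 = k3\<close> ne' by (cases "j = k1") metis+
    qed
    then show False using psi_inj V assms(6) by blast
  qed
qed

lemma not_adj_if_two_coords_differ:
  assumes "i \<noteq> j" "\<psi> a i \<noteq> \<psi> b i" "\<psi> a j \<noteq> \<psi> b j"
  shows "\<not> adj Hg a b"
  using assms edge_coord_props(3) by metis

lemma chordless_sq_completion:
  assumes xu: "adj Hg x u" and xw: "adj Hg x w" and uw: "u \<noteq> w"
    and ne: "edge_coord x u \<noteq> edge_coord x w"
  defines "i \<equiv> edge_coord x u" and "j \<equiv> edge_coord x w"
  obtains y where "y \<in> verts Hg" "\<psi> y = (\<psi> x)(i := \<psi> u i, j := \<psi> w j)" "chordless_sq Hg x u y w"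
proof -
  note pu = edge_coord_props[OF xu, folded i_def]
  note pw = edge_coord_props[OF xw, folded j_def]
  have ij: "i \<noteq> j" using ne i_def j_def by simp
  have V: "x \<in> verts Hg" "u \<in> verts Hg" "w \<in> verts Hg" using adj_in_verts xu xw by auto
  define X U Wv where "X = \<psi> x" "U = \<psi> u" "Wv = \<psi> w"
  define Y where "Y = X(i := U i, j := Wv j)"
  have XP: "X \<in> PiE I (\<lambda>i. verts (Gs i))" "U \<in> PiE I (\<lambda>i. verts (Gs i))" "Wv \<in> PiE I (\<lambda>i. verts (Gs i))"
    using psi_P V X_U_Wv_def by auto
  have YP: "Y \<in> PiE I (\<lambda>i. verts (Gs i))"
    using XP pu(1) pw(1) unfolding Y_def by (auto simp: PiE_iff extensional_def)
  obtain y where y: "y \<in> verts Hg" "\<psi> y = Y" using psi_surj YP by blast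
  have Uj: "U j = X j" using pu(3) ij X_U_Wv_def by metis
  have Wi: "Wv i = X i" using pw(3) ij X_U_Wv_def by metis
  have Ui: "U i \<noteq> X i" and Wj: "Wv j \<noteq> X j" using pu(2) pw(2) X_U_Wv_def by auto
  have Yi: "Y i = U i" and Yj: "Y j = Wv j" using ij unfolding Y_def by auto
  have "adj (Gs j) (U j) (Y j)" using pw(4) Uj Yj X_U_Wv_def by simp
  moreover have "\<forall>t\<in>I. t \<noteq> j \<longrightarrow> U t = Y t" using pu(3) X_U_Wv_def unfolding Y_def by auto
  ultimately have "adj P U Y" unfolding adj_cart_prod_iff using XP(2) YP pw(1) by blast
  then have uy: "adj Hg u y" using psi_adj V y X_U_Wv_def by simp
  have "adj (Gs i) (Y i) (Wv i)" using pu(4) Wi Yi X_U_Wv_def adj_commute by metis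
  moreover have "\<forall>t\<in>I. t \<noteq> i \<longrightarrow> Y t = Wv t" using pw(3) X_U_Wv_def unfolding Y_def by auto
  ultimately have "adj P Y Wv" unfolding adj_cart_prod_iff using XP(3) YP pu(1) by blast
  then have yw: "adj Hg y w" using psi_adj V y X_U_Wv_def by simp
  have ne_y: "y \<noteq> x" "y \<noteq> u" "y \<noteq> w" using y Yi Yj Ui Uj Wi Wj X_U_Wv_def by auto
  have "\<not> adj Hg u w" "\<not> adj Hg x y"
    using not_adj_if_two_coords_differ[OF ij] Ui Uj Wi Wj Yi Yj y(2) X_U_Wv_def by auto
  moreover have "x \<noteq> u" "x \<noteq> w" using xu xw by (auto simp: adj_def)
  ultimately have "chordless_sq Hg x u y w"
    unfolding chordless_sq_def using xu uy yw xw adj_commute[of Hg w x] uw ne_y by auto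
  then show ?thesis using that y X_U_Wv_def Y_def by blast
qed

text \<open>A top z of a square on x, u, w agrees with u off the coordinate k of the edge u z and
  with w off the coordinate l of z w. Since u and w differ exactly in the coordinates i and j,
  the only choice other than k = j and l = i would make z = x.\<close>

lemma sq_top_edge_coords:
  assumes xu: "adj Hg x u" and xw: "adj Hg x w"
    and ne: "edge_coord x u \<noteq> edge_coord x w" and z: "z \<in> sq_tops Hg x u w"
  shows "edge_coord u z = edge_coord x w" "edge_coord z w = edge_coord x u"
proof -
  define i j where "i = edge_coord x u" "j = edge_coord x w"
  note pu = edge_coord_props[OF xu, folded i_j_def(1)]
  note pw = edge_coord_props[OF xw, folded i_j_def(2)]
  have ij: "i \<noteq> j" using ne i_j_def by simp
  have zz: "z \<noteq> x" "adj Hg u z" "adj Hg z w" using z by (auto simp: sq_tops_def)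
  define k l where "k = edge_coord u z" "l = edge_coord z w"
  note pk = edge_coord_props[OF zz(2), folded k_l_def(1)]
  note pl = edge_coord_props[OF zz(3), folded k_l_def(2)]
  have k: "k = j"
  proof (rule ccontr)
    assume "k \<noteq> j"
    then have "\<psi> z j = \<psi> x j" using pk(3) pu(3) ij by metis
    then have "l = j" using pl(3) pw(2) by metis
    then have "\<psi> z i = \<psi> x i" using pl(3) pw(3) ij by metis
    then have "k = i" using pk(3) pu(2) by metis
    have "\<psi> z = \<psi> x"
    proof
      fix t show "\<psi> z t = \<psi> x t"
        using \<open>\<psi> z i = \<psi> x i\<close> pk(3) pu(3) \<open>k = i\<close> by (cases "t = i") metis+
    qed
    then show False using psi_inj adj_in_verts zz xu by metis
  qed
  moreover have "l = i"
  proof (rule ccontr)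
    assume "l \<noteq> i"
    then have "\<psi> z i = \<psi> w i" using pl(3) by metis
    moreover have "\<psi> z i = \<psi> u i" using pk(3) k ij by metis
    ultimately show False using pu(2) pw(3) ij by metis
  qed
  ultimately show "edge_coord u z = edge_coord x w" "edge_coord z w = edge_coord x u"
    using i_j_def k_l_def by simp_all
qed

lemma sq_top_coords:
  assumes xu: "adj Hg x u" and xw: "adj Hg x w"
    and ne: "edge_coord x u \<noteq> edge_coord x w" and z: "z \<in> sq_tops Hg x u w"
  defines "i \<equiv> edge_coord x u" and "j \<equiv> edge_coord x w"
  shows "\<psi> z = (\<psi> x)(i := \<psi> u i, j := \<psi> w j)"
proof
  have zz: "adj Hg u z" "adj Hg z w" using z by (auto simp: sq_tops_def)
  note k = sq_top_edge_coords[OF assms(1-4), folded i_def j_def]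
  have ij: "i \<noteq> j" using ne by (simp add: i_def j_def)
  fix t
  have "t \<noteq> j \<Longrightarrow> \<psi> u t = \<psi> z t" using edge_coord_props(3)[OF zz(1)] k(1) by metis
  moreover have "t \<noteq> i \<Longrightarrow> \<psi> z t = \<psi> w t" using edge_coord_props(3)[OF zz(2)] k(2) by metis
  moreover have "t \<noteq> i \<Longrightarrow> \<psi> x t = \<psi> u t" using edge_coord_props(3)[OF xu] i_def by metis
  ultimately show "\<psi> z t = ((\<psi> x)(i := \<psi> u i, j := \<psi> w j)) t"
    using ij by (cases "t = i"; cases "t = j") auto
qed

lemma unique_chordless_square:
  assumes xu: "adj Hg x u" and xw: "adj Hg x w" and uw: "u \<noteq> w"
    and ne: "edge_coord x u \<noteq> edge_coord x w"
  shows "card (sq_tops Hg x u w) = 1 \<and> (\<forall>y\<in>sq_tops Hg x u w. chordless_sq Hg x u y w)"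
proof -
  obtain y where y: "y \<in> verts Hg" "\<psi> y = (\<psi> x)(edge_coord x u := \<psi> u (edge_coord x u),
      edge_coord x w := \<psi> w (edge_coord x w))" "chordless_sq Hg x u y w"
    using chordless_sq_completion[OF assms] by blast
  have "y \<in> sq_tops Hg x u w" using y(3) by (auto simp: sq_tops_def chordless_sq_def)
  moreover have "z = y" if "z \<in> sq_tops Hg x u w" for z
    using sq_top_coords[OF xu xw ne that] y(1,2) psi_inj adj_in_verts that
    by (metis (no_types, lifting) mem_Collect_eq sq_tops_def)
  ultimately have "sq_tops Hg x u w = {y}" by blast
  then show ?thesis using y(3) by simp
qed

lemma opposite_in_coord_rel:
  assumes "opposite Hg e f"
  shows "(e, f) \<in> coord_rel Hg I \<psi>"
proof -
  obtain a u x w where s: "chordless_sq Hg a u x w" and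
    o: "(e = {a, u} \<and> f = {x, w}) \<or> (e = {x, w} \<and> f = {a, u}) \<or>
      (e = {a, w} \<and> f = {x, u}) \<or> (e = {x, u} \<and> f = {a, w})"
    using assms unfolding opposite_def by blast
  have A: "adj Hg a u" "adj Hg u x" "adj Hg x w" "adj Hg w a" and D: "a \<noteq> x" "u \<noteq> w"
    using s by (auto simp: chordless_sq_def)
  have A': "adj Hg u a" "adj Hg x u" "adj Hg w x" "adj Hg a w" using A adj_commute by metis+
  have "edge_coord a u = edge_coord x w" using four_cycle_edge_coord[OF A D] .
  moreover have "edge_coord a w = edge_coord x u"
    using four_cycle_edge_coord[OF A'(4) A'(3) A'(2) A'(1)] D by metis
  ultimately show ?thesis using o coord_rel_iff A A' by auto
qed

lemma delta_subset_coord_rel: "delta Hg \<subseteq> coord_rel Hg I \<psi>"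
proof
  fix z assume "z \<in> delta Hg"
  then obtain e f where z: "z = (e, f)" "(e, f) \<in> delta Hg" by (cases z) auto
  have E: "e \<in> edges Hg" using z(2) by (auto simp: delta_def)
  from z(2) consider (a) "e \<noteq> f \<and> (\<exists>v u w. e = {v, u} \<and> f = {v, w} \<and> adj Hg v u \<and> adj Hg v w \<and>
          \<not> (card (sq_tops Hg v u w) = 1 \<and> (\<forall>x\<in>sq_tops Hg v u w. chordless_sq Hg v u x w)))"
    | (b) "opposite Hg e f" | (c) "e = f"
    unfolding delta_def by blast
  then show "z \<in> coord_rel Hg I \<psi>"
  proof cases
    case a
    then obtain x u w where h: "e \<noteq> f" "e = {x, u}" "f = {x, w}" "adj Hg x u" "adj Hg x w"
      "\<not> (card (sq_tops Hg x u w) = 1 \<and> (\<forall>y\<in>sq_tops Hg x u w. chordless_sq Hg x u y w))" by blast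
    have "u \<noteq> w" using h by auto
    then have "edge_coord x u = edge_coord x w" using unique_chordless_square h by blast
    then show ?thesis using coord_rel_iff h z by simp
  next
    case b
    then show ?thesis using opposite_in_coord_rel z by simp
  next
    case c
    obtain a b where "adj Hg a b" "e = {a, b}" using edge_is_adj E by blast
    then show ?thesis using coord_rel_iff c z by simp
  qed
qed

lemma trancl_delta_subset_coord_rel: "(delta Hg)\<^sup>+ \<subseteq> coord_rel Hg I \<psi>"
proof
  fix z assume "z \<in> (delta Hg)\<^sup>+"
  then have "z \<in> (coord_rel Hg I \<psi>)\<^sup>+" using trancl_mono delta_subset_coord_rel by blast
  then show "z \<in> coord_rel Hg I \<psi>" using trancl_id[OF coord_rel_trans] by simp
qed

end

section \<open>The classes of d_v^* and the squares between them\<close>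

locale pointed_graph =
  fixes G :: "'a graph" and v :: 'a
  assumes simple: "simple_graph G"
begin

abbreviation "R \<equiv> d_v_star G v"
abbreviation "C \<equiv> star_classes G v"
definition star_class :: "'a \<Rightarrow> 'a set set" where "star_class u = R `` {{v, u}}"
text \<open>The cross squares are the squares contributing F_v; their tops are the vertices of S_v at
  distance two from v.\<close>

definition cross_square :: "'a \<Rightarrow> 'a \<Rightarrow> 'a \<Rightarrow> bool" where
  "cross_square u x w \<longleftrightarrow> chordless_sq G v u x w \<and> star_class u \<noteq> star_class w"

lemma finite_verts: "finite (verts G)" using simple by (simp add: simple_graph_def)

lemma edge_doubleton: "e \<in> edges G \<Longrightarrow> \<exists>x y. x \<noteq> y \<and> x \<in> verts G \<and> y \<in> verts G \<and> e = {x, y}"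
  using simple by (auto simp: simple_graph_def)

lemma adjD: "adj G x y \<Longrightarrow> x \<in> verts G \<and> y \<in> verts G \<and> x \<noteq> y \<and> {x, y} \<in> edges G"
proof -
  assume a: "adj G x y"
  then have "{x, y} \<in> edges G" "x \<noteq> y" by (auto simp: adj_def)
  then obtain p q where "p \<noteq> q" "p \<in> verts G" "q \<in> verts G" "{x, y} = {p, q}" using edge_doubleton by blast
  then show ?thesis using a by (auto simp: adj_def doubleton_eq_iff)
qed

lemma adj_if_edge_at_v: "{v, u} \<in> edges G \<Longrightarrow> adj G v u"
proof -
  assume a: "{v, u} \<in> edges G"
  then obtain p q where "p \<noteq> q" "{v, u} = {p, q}" using edge_doubleton by blast
  then have "v \<noteq> u" by (auto simp: doubleton_eq_iff)
  with a show ?thesis by (simp add: adj_def)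
qed

lemma d_v_subset: "d_v G v \<subseteq> edges G \<times> edges G"
  by (auto simp: d_v_def delta_def)

lemma equiv_R: "equiv (edges G) R"
  unfolding d_v_star_def by (rule equiv_Inter_closure(1)[OF d_v_subset])

lemma d_v_subset_R: "d_v G v \<subseteq> R"
  unfolding d_v_star_def by (rule equiv_Inter_closure(2)[OF d_v_subset])

lemma delta_at_v_in_R: "(e, f) \<in> delta G \<Longrightarrow> v \<in> e \<or> v \<in> f \<Longrightarrow> (e, f) \<in> R"
  using d_v_subset_R delta_in_edges[of e f G] by (auto simp: d_v_def inc_edges_def)

lemma R_sym: "(e, f) \<in> R \<Longrightarrow> (f, e) \<in> R"
  using equiv_R by (auto simp: equiv_def sym_def)

lemma R_trans: "(e, f) \<in> R \<Longrightarrow> (f, g) \<in> R \<Longrightarrow> (e, g) \<in> R"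
  using equiv_R by (auto simp: equiv_def trans_def)

lemma R_refl: "e \<in> edges G \<Longrightarrow> (e, e) \<in> R"
  using equiv_R by (auto simp: equiv_def refl_on_def)

lemma star_class_eq_iff:
  assumes "adj G v u" "adj G v w"
  shows "star_class u = star_class w \<longleftrightarrow> ({v, u}, {v, w}) \<in> R"
  unfolding star_class_def
proof
  assume "R `` {{v, u}} = R `` {{v, w}}"
  moreover have "({v, w}, {v, w}) \<in> R" using assms adjD R_refl by blast
  ultimately show "({v, u}, {v, w}) \<in> R" by blast
next
  assume "({v, u}, {v, w}) \<in> R"
  then show "R `` {{v, u}} = R `` {{v, w}}"
    using equiv_R equiv_class_eq by metis
qed

lemma star_class_in_C: "adj G v u \<Longrightarrow> star_class u \<in> C"
proof -
  assume a: "adj G v u"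
  then have e: "{v, u} \<in> edges G" using adjD by blast
  then have "star_class u \<in> edges G // R" unfolding star_class_def by (rule quotientI)
  moreover have "{v, u} \<in> star_class u \<inter> inc_edges G v"
    using e R_refl by (auto simp: star_class_def inc_edges_def)
  ultimately show ?thesis by (auto simp: star_classes_def)
qed

lemma N_phi_iff: "\<phi> \<in> C \<Longrightarrow> u \<in> N_phi \<phi> v \<longleftrightarrow> adj G v u \<and> star_class u = \<phi>"
proof -
  assume p: "\<phi> \<in> C"
  then have q: "\<phi> \<in> edges G // R" by (simp add: star_classes_def)
  show ?thesis
  proof
    assume "u \<in> N_phi \<phi> v"
    then have m: "{v, u} \<in> \<phi>" by (simp add: N_phi_def)
    with q have "{v, u} \<in> edges G" using equiv_R in_quotient_imp_subset by blast
    then have "adj G v u" by (rule adj_if_edge_at_v)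
    moreover have "star_class u = \<phi>" unfolding star_class_def
      using q m equiv_R by (metis Image_singleton_iff equiv_class_eq_iff quotientE)
    ultimately show "adj G v u \<and> star_class u = \<phi>" by simp
  next
    assume "adj G v u \<and> star_class u = \<phi>"
    then show "u \<in> N_phi \<phi> v" using adjD R_refl by (auto simp: N_phi_def star_class_def)
  qed
qed

lemma star_class_witness: "\<phi> \<in> C \<Longrightarrow> \<exists>u. adj G v u \<and> star_class u = \<phi>"
proof -
  assume p: "\<phi> \<in> C"
  then obtain e where e: "e \<in> \<phi>" "e \<in> edges G" "v \<in> e"
    by (auto simp: star_classes_def inc_edges_def)
  then obtain x y where "x \<noteq> y" "e = {x, y}" using edge_doubleton by blast
  then obtain u where "e = {v, u}" using e by auto
  then have "u \<in> N_phi \<phi> v" using e by (simp add: N_phi_def)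
  then show ?thesis using N_phi_iff p by blast
qed

lemma finite_C: "finite C"
proof -
  have "finite (edges G)" using finite_verts simple
    by (metis (no_types, lifting) Pow_iff finite_Pow_iff rev_finite_subset subsetI edge_doubleton insert_subset empty_subsetI)
  then have "finite (edges G // R)" by (simp add: finite_quotient[OF _ equiv_type[OF equiv_R]])
  then show ?thesis by (rule rev_finite_subset) (auto simp: star_classes_def)
qed

lemma chordless_sqD: "chordless_sq G v u x w \<Longrightarrow> adj G v u \<and> adj G v w \<and> adj G u x \<and> adj G w x
   \<and> \<not> adj G v x \<and> \<not> adj G u w \<and> distinct [v, u, x, w]"
  unfolding chordless_sq_def using adj_commute by (auto simp: adj_commute)

lemma cross_square_commute: "cross_square u x w \<longleftrightarrow> cross_square w x u"
  unfolding cross_square_def using chordless_sq_commute[of G v u x w] by auto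

lemma distinct_classes_square:
  assumes "adj G v u" "adj G v w" "star_class u \<noteq> star_class w"
  shows "u \<noteq> w" "card (sq_tops G v u w) = 1" "\<forall>x\<in>sq_tops G v u w. chordless_sq G v u x w"
proof -
  show uw: "u \<noteq> w" using assms by auto
  have nd: "({v, u}, {v, w}) \<notin> delta G"
  proof
    assume "({v, u}, {v, w}) \<in> delta G"
    then have "({v, u}, {v, w}) \<in> R" by (rule delta_at_v_in_R) simp
    then show False using assms star_class_eq_iff by blast
  qed
  have e: "{v, u} \<in> edges G" "{v, w} \<in> edges G" using assms adjD by auto
  have ne: "{v, u} \<noteq> {v, w}" using uw by (auto simp: doubleton_eq_iff)
  from nd e ne assms(1,2)
  have "card (sq_tops G v u w) = 1 \<and> (\<forall>x\<in>sq_tops G v u w. chordless_sq G v u x w)"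
    unfolding delta_def by blast
  then show "card (sq_tops G v u w) = 1" "\<forall>x\<in>sq_tops G v u w. chordless_sq G v u x w" by auto
qed

lemma cross_square_exists:
  assumes "adj G v u" "adj G v w" "star_class u \<noteq> star_class w"
  shows "\<exists>x. cross_square u x w"
proof -
  from distinct_classes_square[OF assms] obtain x where "x \<in> sq_tops G v u w" "chordless_sq G v u x w"
    by (metis card_1_singletonE insertI1)
  then show ?thesis using assms(3) by (auto simp: cross_square_def)
qed

lemma cross_square_unique:
  assumes "cross_square u x w" "cross_square u y w"
  shows "x = y"
proof -
  have a: "adj G v u" "adj G v w" "star_class u \<noteq> star_class w" using assms(1) chordless_sqD by (auto simp: cross_square_def)
  have "x \<in> sq_tops G v u w" "y \<in> sq_tops G v u w"
    using assms by (auto simp: cross_square_def sq_tops_def chordless_sq_def)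
  with distinct_classes_square(2)[OF a] show ?thesis by (metis card_1_singletonE singletonD)
qed

lemma chordless_sq_opposite_R:
  assumes "chordless_sq G v u x w"
  shows "({v, u}, {x, w}) \<in> R" "({v, w}, {x, u}) \<in> R"
proof -
  have e: "{v, u} \<in> edges G" "{x, w} \<in> edges G" "{v, w} \<in> edges G" "{x, u} \<in> edges G"
    using assms chordless_sqD adjD by (metis insert_commute)+
  have "opposite G {v, u} {x, w}" "opposite G {v, w} {x, u}"
    using assms unfolding opposite_def by blast+
  then have "({v, u}, {x, w}) \<in> delta G" "({v, w}, {x, u}) \<in> delta G"
    using e by (auto simp: delta_def)
  then show "({v, u}, {x, w}) \<in> R" "({v, w}, {x, u}) \<in> R" using delta_at_v_in_R by auto
qed

lemma cross_square_top_nbrs: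
  assumes "cross_square u x w" "adj G v y" "adj G x y"
  shows "y = u \<or> y = w"
proof (rule ccontr)
  assume ny: "\<not> (y = u \<or> y = w)"
  have c: "chordless_sq G v u x w" "star_class u \<noteq> star_class w" using assms(1) by (auto simp: cross_square_def)
  note ca = chordless_sqD[OF c(1)]
  have yv: "y \<noteq> v" "y \<noteq> x" using assms adjD by blast+
  have sub: "{u, y} \<subseteq> sq_tops G w v x"
    using ca ny yv assms(2,3) by (auto simp: sq_tops_def adj_commute)
  have fin: "finite (sq_tops G w v x)"
    by (rule rev_finite_subset[OF finite_verts]) (auto simp: sq_tops_def dest: adjD)
  have "card {u, y} = 2" using ny by auto
  then have "card (sq_tops G w v x) \<noteq> 1" using card_mono[OF fin sub] by auto
  moreover have e: "{w, v} \<in> edges G" "{w, x} \<in> edges G" using ca adjD adj_commute by metis+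
  moreover have "{w, v} \<noteq> {w, x}" using ca by (auto simp: doubleton_eq_iff)
  moreover have "adj G w v" "adj G w x" using ca adj_commute[of G v w] by auto
  ultimately have "({w, v}, {w, x}) \<in> delta G" unfolding delta_def by blast
  then have r1: "({w, v}, {w, x}) \<in> R" by (rule delta_at_v_in_R) simp
  have r2: "({v, u}, {x, w}) \<in> R" by (rule chordless_sq_opposite_R(1)[OF c(1)])
  have "({v, u}, {v, w}) \<in> R"
    using R_trans[OF r2 R_sym[OF r1[unfolded insert_commute[of w v] insert_commute[of w x]]]]
    by (simp add: insert_commute)
  then have "star_class u = star_class w" using star_class_eq_iff ca by blast
  with c(2) show False by simp
qed

end

section \<open>Labels of the vertices of S_v\<close>

context pointed_graph
begin

abbreviation "S \<equiv> partial_star G v"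
definition "Nv = {u. adj G v u}"
definition "Tops = {x. \<exists>u w. cross_square u x w}"
definition label :: "'a \<Rightarrow> 'a set" where
  "label s = (if s = v then {} else if adj G v s then {s} else {u. adj G v u \<and> adj G u s})"
definition transversal :: "'a set \<Rightarrow> bool" where
  "transversal Z \<longleftrightarrow> Z \<subseteq> Nv \<and> (\<forall>p\<in>Z. \<forall>q\<in>Z. star_class p = star_class q \<longrightarrow> p = q)"

lemma cross_squareD: "cross_square a x b \<Longrightarrow> x \<noteq> v \<and> \<not> adj G v x \<and> adj G v a \<and> adj G v b \<and> a \<noteq> b \<and> star_class a \<noteq> star_class b
   \<and> adj G a x \<and> adj G b x \<and> a \<noteq> x \<and> b \<noteq> x \<and> a \<noteq> v \<and> b \<noteq> v \<and> \<not> adj G a b"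
  using chordless_sqD[of a x b] unfolding cross_square_def by auto

lemma finite_Nv: "finite Nv"
  by (rule rev_finite_subset[OF finite_verts]) (auto simp: Nv_def dest: adjD)

lemma transversal_finite: "transversal Z \<Longrightarrow> finite Z"
  using finite_Nv by (auto simp: transversal_def intro: rev_finite_subset)

lemma transversal_subset: "transversal Z \<Longrightarrow> Y \<subseteq> Z \<Longrightarrow> transversal Y"
  unfolding transversal_def by blast

lemma F_v_eq: "F_v G v = {f. \<exists>u x w. cross_square u x w \<and> (f = {u, x} \<or> f = {x, w})}"
proof -
  have "chordless_sq G v u x w \<Longrightarrow> ({v, u}, {v, w}) \<notin> R \<longleftrightarrow> star_class u \<noteq> star_class w" for u x w
    using star_class_eq_iff chordless_sqD by blast
  then show ?thesis unfolding F_v_def cross_square_def by blast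
qed

lemma inc_edges_eq: "inc_edges G v = {{v, u} | u. adj G v u}"
proof -
  have "e \<in> inc_edges G v \<longleftrightarrow> (\<exists>u. e = {v, u} \<and> adj G v u)" for e
  proof
    assume "e \<in> inc_edges G v"
    then have e: "e \<in> edges G" "v \<in> e" by (auto simp: inc_edges_def)
    then obtain x y where "x \<noteq> y" "e = {x, y}" using edge_doubleton by blast
    then obtain u where "e = {v, u}" using e by auto
    then show "\<exists>u. e = {v, u} \<and> adj G v u" using e adj_if_edge_at_v by blast
  next
    assume "\<exists>u. e = {v, u} \<and> adj G v u"
    then show "e \<in> inc_edges G v" using adjD by (auto simp: inc_edges_def)
  qed
  then show ?thesis by blast
qed

lemma edges_S: "edges S = {{v, u} | u. adj G v u} \<union> {f. \<exists>u x w. cross_square u x w \<and> (f = {u, x} \<or> f = {x, w})}"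
  by (simp add: partial_star_def inc_edges_eq F_v_eq)

lemma verts_S: "verts S = {v} \<union> Nv \<union> Tops"
proof -
  have "verts S = {v} \<union> \<Union> (edges S)" by (simp add: partial_star_def)
  also have "\<dots> = {v} \<union> Nv \<union> Tops"
  proof
    show "{v} \<union> \<Union> (edges S) \<subseteq> {v} \<union> Nv \<union> Tops"
    proof
      fix y assume "y \<in> {v} \<union> \<Union> (edges S)"
      then consider "y = v" | u where "adj G v u" "y \<in> {v, u}"
        | u x w where "cross_square u x w" "y \<in> {u, x} \<or> y \<in> {x, w}"
        unfolding edges_S by blast
      then show "y \<in> {v} \<union> Nv \<union> Tops"
      proof cases
        case 1 then show ?thesis by simp
      next
        case 2 then show ?thesis by (auto simp: Nv_def)
      next
        case 3
        have "x \<in> Tops" using 3(1) by (auto simp: Tops_def)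
        moreover have "u \<in> Nv" "w \<in> Nv" using cross_squareD[OF 3(1)] by (auto simp: Nv_def)
        ultimately show ?thesis using 3(2) by auto
      qed
    qed
  next
    have "Nv \<subseteq> \<Union> (edges S)" unfolding edges_S Nv_def by blast
    moreover have "Tops \<subseteq> \<Union> (edges S)" unfolding edges_S Tops_def by blast
    ultimately show "{v} \<union> Nv \<union> Tops \<subseteq> {v} \<union> \<Union> (edges S)" by blast
  qed
  finally show ?thesis .
qed

lemma label_v: "label v = {}" by (simp add: label_def)
lemma label_nbr: "adj G v u \<Longrightarrow> label u = {u}" using adjD by (auto simp: label_def)
lemma label_top: "cross_square a x b \<Longrightarrow> label x = {a, b}"
proof -
  assume p: "cross_square a x b"
  note d = cross_squareD[OF p]
  have "{u. adj G v u \<and> adj G u x} = {a, b}"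
  proof
    show "{u. adj G v u \<and> adj G u x} \<subseteq> {a, b}" using cross_square_top_nbrs[OF p] adj_commute by fastforce
    show "{a, b} \<subseteq> {u. adj G v u \<and> adj G u x}" using d by auto
  qed
  then show ?thesis using d by (simp add: label_def)
qed

lemma verts_S_cases:
  assumes "s \<in> verts S"
  obtains "s = v" | "adj G v s" | a b where "cross_square a s b"
  using assms unfolding verts_S Nv_def Tops_def by blast

lemma label_transversal: "s \<in> verts S \<Longrightarrow> transversal (label s) \<and> card (label s) \<le> 2"
proof (erule verts_S_cases)
  assume "s = v" then show ?thesis by (simp add: label_v transversal_def)
next
  assume "adj G v s" then show ?thesis by (simp add: label_nbr transversal_def Nv_def)
next
  fix a b assume p: "cross_square a s b"
  note d = cross_squareD[OF p]
  show ?thesis using d by (auto simp: label_top[OF p] transversal_def Nv_def card_insert_if)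
qed

lemma v_notin_Tops: "v \<notin> Tops" using cross_squareD by (auto simp: Tops_def)
lemma Tops_not_adj_v: "x \<in> Tops \<Longrightarrow> \<not> adj G v x" using cross_squareD by (auto simp: Tops_def)

lemma card_label:
  assumes "s \<in> verts S"
  shows "card (label s) = 0 \<longleftrightarrow> s = v" "card (label s) = 1 \<longleftrightarrow> adj G v s"
    "card (label s) = 2 \<longleftrightarrow> s \<in> Tops"
proof -
  have "(card (label s) = 0 \<longleftrightarrow> s = v) \<and> (card (label s) = 1 \<longleftrightarrow> adj G v s) \<and> (card (label s) = 2 \<longleftrightarrow> s \<in> Tops)"
    using assms
  proof (cases rule: verts_S_cases)
    case 1
    then show ?thesis using v_notin_Tops by (simp add: label_v adj_def)
  next
    case 2
    then have "s \<noteq> v" "s \<notin> Tops" using Tops_not_adj_v adjD by blast+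
    then show ?thesis using 2 by (simp add: label_nbr)
  next
    case (3 a b)
    note d = cross_squareD[OF 3]
    have "s \<in> Tops" using 3 by (auto simp: Tops_def)
    then show ?thesis using d by (simp add: label_top[OF 3])
  qed
  then show "card (label s) = 0 \<longleftrightarrow> s = v" "card (label s) = 1 \<longleftrightarrow> adj G v s"
    "card (label s) = 2 \<longleftrightarrow> s \<in> Tops" by auto
qed

lemma label_inj:
  assumes "s \<in> verts S" "t \<in> verts S" "label s = label t"
  shows "s = t"
  using assms(1)
proof (cases rule: verts_S_cases)
  case 1
  then have "card (label t) = 0" using assms(3) label_v by simp
  then show ?thesis using card_label(1)[OF assms(2)] 1 by simp
next
  case 2
  then have "card (label t) = 1" using assms(3)[symmetric] label_nbr by simp
  then have "adj G v t" using card_label(2)[OF assms(2)] by simp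
  then show ?thesis using 2 assms(3) by (simp add: label_nbr)
next
  case (3 a b)
  have "s \<in> Tops" using 3 by (auto simp: Tops_def)
  then have "card (label t) = 2" using assms(3)[symmetric] card_label(3)[OF assms(1)] by simp
  then have "t \<in> Tops" using card_label(3)[OF assms(2)] by simp
  then obtain c d where cd: "cross_square c t d" by (auto simp: Tops_def)
  have "{a, b} = {c, d}" using label_top[OF 3] label_top[OF cd] assms(3) by simp
  then have "(a = c \<and> b = d) \<or> (a = d \<and> b = c)" by (auto simp: doubleton_eq_iff)
  then show ?thesis
  proof
    assume "a = c \<and> b = d"
    then show ?thesis using cross_square_unique[OF 3] cd by simp
  next
    assume e: "a = d \<and> b = c"
    have "cross_square a t b" using cd cross_square_commute e by simp
    then show ?thesis using cross_square_unique[OF 3] by simp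
  qed
qed

lemma label_surj:
  assumes "transversal Z" "card Z \<le> 2"
  shows "\<exists>s\<in>verts S. label s = Z"
proof -
  have fin: "finite Z" using transversal_finite assms(1) .
  consider "card Z = 0" | "card Z = 1" | "card Z = 2" using assms(2) by linarith
  then show ?thesis
  proof cases
    case 1 then have "Z = {}" using fin by simp
    have "v \<in> verts S" by (simp add: verts_S)
    then show ?thesis using label_v \<open>Z = {}\<close> by blast
  next
    case 2 then obtain u where u: "Z = {u}" using card_1_singletonE by blast
    then have "adj G v u" using assms(1) by (auto simp: transversal_def Nv_def)
    then have "u \<in> verts S" "label u = Z" using u label_nbr by (auto simp: verts_S Nv_def)
    then show ?thesis by blast
  next
    case 3 then obtain a b where ab: "Z = {a, b}" "a \<noteq> b" using card_2_iff[THEN iffD1] by blast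
    then have "adj G v a" "adj G v b" "star_class a \<noteq> star_class b" using assms(1) by (auto simp: transversal_def Nv_def)
    then obtain x where x: "cross_square a x b" using cross_square_exists by blast
    have "x \<in> Tops" using x by (auto simp: Tops_def)
    then have "x \<in> verts S" by (simp add: verts_S)
    then show ?thesis using label_top[OF x] ab by blast
  qed
qed

lemma add_one_label_if_adj_S:
  assumes "adj S s t"
  shows "add_one (label s) (label t) \<or> add_one (label t) (label s)"
proof -
  have "{s, t} \<in> edges S" using assms by (auto simp: adj_def)
  then show ?thesis
    unfolding edges_S
  proof
    assume "{s, t} \<in> {{v, u} |u. adj G v u}"
    then obtain u where u: "{s, t} = {v, u}" "adj G v u" by blast
    then have "(s = v \<and> t = u) \<or> (s = u \<and> t = v)" by (auto simp: doubleton_eq_iff)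
    then show ?thesis
    proof (elim disjE conjE)
      assume "s = v" "t = u" then show ?thesis using label_v label_nbr[OF u(2)] add_one_empty[of u] by simp
    next
      assume "s = u" "t = v" then show ?thesis using label_v label_nbr[OF u(2)] add_one_empty[of u] by simp
    qed
  next
    assume "{s, t} \<in> {f. \<exists>u x w. cross_square u x w \<and> (f = {u, x} \<or> f = {x, w})}"
    then obtain u x w where p: "cross_square u x w" "{s, t} = {u, x} \<or> {s, t} = {x, w}" by blast
    note d = cross_squareD[OF p(1)]
    have lbl: "label x = {u, w}" "label u = {u}" "label w = {w}" using label_top[OF p(1)] label_nbr d by auto
    from p(2) show ?thesis
    proof
      assume "{s, t} = {u, x}"
      then have "(s = u \<and> t = x) \<or> (s = x \<and> t = u)" by (auto simp: doubleton_eq_iff)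
      then show ?thesis using lbl add_one_pair[of u w] d by auto
    next
      assume "{s, t} = {x, w}"
      then have "(s = x \<and> t = w) \<or> (s = w \<and> t = x)" by (auto simp: doubleton_eq_iff)
      then show ?thesis using lbl add_one_pair[of u w] d by auto
    qed
  qed
qed

lemma adj_S_if_add_one_label:
  assumes vs: "s \<in> verts S" "t \<in> verts S" and i: "add_one (label s) (label t)"
  shows "adj S s t"
proof -
  obtain u where u: "u \<notin> label s" "label t = insert u (label s)" using i by (auto simp: add_one_def)
  have ct: "card (label t) = Suc (card (label s))" using u label_transversal[OF vs(1)] transversal_finite by simp
  show ?thesis using vs(1)
  proof (cases rule: verts_S_cases)
    case 1
    then have "label t = {u}" using u label_v by simp
    moreover have "u \<in> verts S" "label u = {u}" "adj G v u"
      using label_transversal[OF vs(2)] calculation by (auto simp: transversal_def Nv_def verts_S label_nbr)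
    ultimately have "t = u" using label_inj vs by metis
    then have "{s, t} \<in> edges S" unfolding edges_S using 1 \<open>adj G v u\<close> by blast
    moreover have "s \<noteq> t" using 1 \<open>t = u\<close> \<open>adj G v u\<close> adjD by blast
    ultimately show ?thesis by (simp add: adj_def)
  next
    case 2
    then have "card (label t) = 2" using ct label_nbr by simp
    then have "t \<in> Tops" using card_label vs by blast
    then obtain c d where cd: "cross_square c t d" by (auto simp: Tops_def)
    have "{c, d} = {u, s}" using label_top[OF cd] u label_nbr[OF 2] by simp
    then have "(c = s) \<or> (d = s)" by (auto simp: doubleton_eq_iff)
    then have "{s, t} \<in> edges S" using cd unfolding edges_S by (auto simp: insert_commute)
    moreover have "s \<noteq> t" using 2 cross_squareD[OF cd] by auto
    ultimately show ?thesis by (simp add: adj_def)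
  next
    case (3 a b)
    then have "card (label t) = 3" using ct label_top[OF 3] cross_squareD[OF 3] by simp
    then show ?thesis using label_transversal[OF vs(2)] by simp
  qed
qed

lemma adj_S_iff:
  "adj S s t \<longleftrightarrow> s \<in> verts S \<and> t \<in> verts S \<and> (add_one (label s) (label t) \<or> add_one (label t) (label s))"
proof
  assume "adj S s t"
  moreover have "s \<in> verts S" "t \<in> verts S" using calculation by (auto simp: adj_def partial_star_def)
  ultimately show "s \<in> verts S \<and> t \<in> verts S \<and> (add_one (label s) (label t) \<or> add_one (label t) (label s))"
    using add_one_label_if_adj_S by blast
qed (use adj_S_if_add_one_label adj_commute in metis)

lemma transversal_step:
  assumes "transversal X" "transversal Y" "card X \<le> 2" "card Y \<le> 2" "X \<noteq> Y"
  shows "\<exists>X'. transversal X' \<and> card X' \<le> 2 \<and> (add_one X X' \<or> add_one X' X) \<and>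
     Suc (card ((X' - Y) \<union> (Y - X'))) = card ((X - Y) \<union> (Y - X))"
proof -
  have fX: "finite X" and fY: "finite Y" using assms transversal_finite by auto
  show ?thesis
  proof (cases "X - Y = {}")
    case False
    then obtain a where a: "a \<in> X" "a \<notin> Y" by blast
    let ?X' = "X - {a}"
    have "(?X' - Y) \<union> (Y - ?X') = ((X - Y) \<union> (Y - X)) - {a}" using a by auto
    moreover have "a \<in> (X - Y) \<union> (Y - X)" using a by auto
    moreover have "finite ((X - Y) \<union> (Y - X))" using fX fY by auto
    ultimately have "Suc (card ((?X' - Y) \<union> (Y - ?X'))) = card ((X - Y) \<union> (Y - X))"
      by (metis card_Suc_Diff1)
    moreover have "transversal ?X'" using assms(1) transversal_subset by blast
    moreover have "card ?X' \<le> 2" using assms(3) card_mono[OF fX, of ?X'] by auto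
    moreover have "add_one ?X' X" using a unfolding add_one_def by (intro exI[of _ a]) auto
    ultimately show ?thesis by blast
  next
    case True
    then have "X \<subseteq> Y" by blast
    then obtain b where b: "b \<in> Y" "b \<notin> X" using assms(5) by blast
    let ?X' = "insert b X"
    have "(?X' - Y) \<union> (Y - ?X') = ((X - Y) \<union> (Y - X)) - {b}" using b \<open>X \<subseteq> Y\<close> by auto
    moreover have "b \<in> (X - Y) \<union> (Y - X)" using b by auto
    moreover have "finite ((X - Y) \<union> (Y - X))" using fX fY by auto
    ultimately have "Suc (card ((?X' - Y) \<union> (Y - ?X'))) = card ((X - Y) \<union> (Y - X))"
      by (metis card_Suc_Diff1)
    moreover have sub: "?X' \<subseteq> Y" using b \<open>X \<subseteq> Y\<close> by auto
    moreover have "transversal ?X'" using assms(2) transversal_subset sub by blast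
    moreover have "card ?X' \<le> 2" using assms(4) card_mono[OF fY sub] by linarith
    moreover have "add_one X ?X'" using b unfolding add_one_def by blast
    ultimately show ?thesis by blast
  qed
qed

lemma walk_S_of_label_distance:
  assumes "s \<in> verts S" "t \<in> verts S"
  shows "\<exists>p. walk S p \<and> hd p = s \<and> last p = t \<and> length p - 1 = card ((label s - label t) \<union> (label t - label s))"
  using assms
proof (induction "card ((label s - label t) \<union> (label t - label s))" arbitrary: s)
  case 0
  have "finite ((label s - label t) \<union> (label t - label s))" using label_transversal 0 transversal_finite by blast
  then have "label s = label t" using 0(1) by auto
  then have "s = t" using label_inj 0 by blast
  then show ?case using 0 by (intro exI[of _ "[s]"]) (auto simp: walk_singleton_iff)
next
  case (Suc n)
  have ne: "label s \<noteq> label t" using Suc(2) by auto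
  obtain X' where X': "transversal X'" "card X' \<le> 2" "add_one (label s) X' \<or> add_one X' (label s)"
     "Suc (card ((X' - label t) \<union> (label t - X'))) = card ((label s - label t) \<union> (label t - label s))"
    using transversal_step[OF _ _ _ _ ne] label_transversal Suc.prems by blast
  obtain s' where s': "s' \<in> verts S" "label s' = X'" using label_surj X' by blast
  have "adj S s s'" using adj_S_iff s' X' Suc.prems by blast
  have "n = card ((label s' - label t) \<union> (label t - label s'))" using X'(4) Suc(2) s'(2) by simp
  then obtain p where p: "walk S p" "hd p = s'" "last p = t" "length p - 1 = n"
    using Suc.hyps(1) s'(1) Suc.prems(2) by blast
  then obtain q where q: "p = s' # q" by (cases p) (auto simp: walk_def)
  have "walk S (s # p)" using p q \<open>adj S s s'\<close> Suc.prems(1) by (simp add: walk_Cons_Cons_iff)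
  then show ?case using p q Suc(2) by (intro exI[of _ "s # p"]) auto
qed

lemma dist_S_le_label:
  assumes "s \<in> verts S" "t \<in> verts S"
  shows "dist S s t \<le> enat (card ((label s - label t) \<union> (label t - label s)))"
  using walk_S_of_label_distance[OF assms] dist_le_walk_length by metis

end

section \<open>Labels of the vertices of H and the embedding gamma\<close>

context pointed_graph
begin

abbreviation "H \<equiv> cart_prod C (\<lambda>\<phi>. star_factor \<phi> v)"
abbreviation "vbar \<equiv> (\<lambda>\<phi>\<in>C. v)"
definition labelH :: "('a set set \<Rightarrow> 'a) \<Rightarrow> 'a set" where
  "labelH a = {a \<phi> | \<phi>. \<phi> \<in> C \<and> a \<phi> \<noteq> v}"

lemma v_notin_N: "\<phi> \<in> C \<Longrightarrow> v \<notin> N_phi \<phi> v"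
  using N_phi_iff adjD by blast

lemma adj_star_factor_iff:
  assumes "\<phi> \<in> C"
  shows "adj (star_factor \<phi> v) a b \<longleftrightarrow> (a = v \<and> b \<in> N_phi \<phi> v) \<or> (b = v \<and> a \<in> N_phi \<phi> v)"
  using v_notin_N[OF assms] unfolding adj_def star_factor_def by (auto simp: doubleton_eq_iff)

lemma verts_H: "verts H = PiE C (\<lambda>\<phi>. insert v (N_phi \<phi> v))"
  by (simp add: cart_prod_def star_factor_def)

lemma adj_H_iff_coord: "adj H a b \<longleftrightarrow> a \<in> verts H \<and> b \<in> verts H \<and>
   (\<exists>\<phi>\<in>C. ((a \<phi> = v \<and> b \<phi> \<in> N_phi \<phi> v) \<or> (b \<phi> = v \<and> a \<phi> \<in> N_phi \<phi> v)) \<and> (\<forall>\<psi>\<in>C. \<psi> \<noteq> \<phi> \<longrightarrow> a \<psi> = b \<psi>))"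
  unfolding adj_cart_prod_iff verts_cart_prod[symmetric] using adj_star_factor_iff by auto

lemma coord_nbr:
  assumes "a \<in> verts H" "\<phi> \<in> C" "a \<phi> \<noteq> v"
  shows "adj G v (a \<phi>) \<and> star_class (a \<phi>) = \<phi>"
proof -
  have "a \<phi> \<in> N_phi \<phi> v" using assms by (auto simp: verts_H PiE_iff)
  then show ?thesis using N_phi_iff assms(2) by blast
qed

lemma labelH_transversal: "a \<in> verts H \<Longrightarrow> transversal (labelH a)"
  unfolding transversal_def labelH_def Nv_def using coord_nbr by fastforce

lemma labelH_inj:
  assumes "a \<in> verts H" "b \<in> verts H" "labelH a = labelH b"
  shows "a = b"
proof (rule PiE_ext[of a C "\<lambda>\<phi>. insert v (N_phi \<phi> v)" b])
  show "a \<in> PiE C (\<lambda>\<phi>. insert v (N_phi \<phi> v))" "b \<in> PiE C (\<lambda>\<phi>. insert v (N_phi \<phi> v))"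
    using assms by (auto simp: verts_H)
  fix \<phi> assume p: "\<phi> \<in> C"
  have one: "x \<phi> = y \<phi>" if xy: "x \<in> verts H" "y \<in> verts H" "labelH x = labelH y" "x \<phi> \<noteq> v" for x y
  proof -
    have "x \<phi> \<in> labelH y" using xy p by (auto simp: labelH_def)
    then obtain \<psi> where q: "\<psi> \<in> C" "y \<psi> \<noteq> v" "x \<phi> = y \<psi>" by (auto simp: labelH_def)
    have "star_class (x \<phi>) = \<phi>" using coord_nbr[OF xy(1) p xy(4)] by blast
    moreover have "star_class (y \<psi>) = \<psi>" using coord_nbr[OF xy(2) q(1) q(2)] by blast
    ultimately have "\<psi> = \<phi>" using q by simp
    then show ?thesis using q by simp
  qed
  show "a \<phi> = b \<phi>"
  proof (cases "a \<phi> = v")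
    case True
    show ?thesis
    proof (rule ccontr)
      assume "a \<phi> \<noteq> b \<phi>"
      then have "b \<phi> \<noteq> v" using True by simp
      then have "b \<phi> = a \<phi>" using one[of b a] assms by simp
      then show False using \<open>a \<phi> \<noteq> b \<phi>\<close> by simp
    qed
  next
    case False then show ?thesis using one[of a b] assms by simp
  qed
qed

lemma vbar_in_H: "vbar \<in> verts H" by (simp add: verts_H)
lemma labelH_vbar: "labelH vbar = {}" by (auto simp: labelH_def)

lemma labelH_upd:
  assumes "a \<in> verts H" "\<phi> \<in> C" "a \<phi> = v" "adj G v u" "star_class u = \<phi>"
  shows "a(\<phi> := u) \<in> verts H" "labelH (a(\<phi> := u)) = insert u (labelH a)" "u \<notin> labelH a"
proof -
  have uN: "u \<in> N_phi \<phi> v" using N_phi_iff assms by blast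
  show "a(\<phi> := u) \<in> verts H" using assms(1,2) uN by (auto simp: verts_H PiE_iff extensional_def)
  have uv: "u \<noteq> v" using assms(4) adjD by blast
  show "labelH (a(\<phi> := u)) = insert u (labelH a)"
  proof
    show "labelH (a(\<phi> := u)) \<subseteq> insert u (labelH a)"
    proof
      fix x assume "x \<in> labelH (a(\<phi> := u))"
      then obtain \<psi> where "\<psi> \<in> C" "(a(\<phi> := u)) \<psi> \<noteq> v" "x = (a(\<phi> := u)) \<psi>" by (auto simp: labelH_def)
      then show "x \<in> insert u (labelH a)" by (cases "\<psi> = \<phi>") (auto simp: labelH_def)
    qed
    show "insert u (labelH a) \<subseteq> labelH (a(\<phi> := u))"
    proof
      fix x assume "x \<in> insert u (labelH a)"
      then show "x \<in> labelH (a(\<phi> := u))"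
      proof
        assume "x = u"
        then have "x = (a(\<phi> := u)) \<phi> \<and> \<phi> \<in> C \<and> (a(\<phi> := u)) \<phi> \<noteq> v" using assms(2) uv by simp
        then show ?thesis unfolding labelH_def by blast
      next
        assume "x \<in> labelH a"
        then obtain \<psi> where q: "\<psi> \<in> C" "a \<psi> \<noteq> v" "x = a \<psi>" by (auto simp: labelH_def)
        then have "\<psi> \<noteq> \<phi>" using assms(3) by auto
        then have "x = (a(\<phi> := u)) \<psi> \<and> \<psi> \<in> C \<and> (a(\<phi> := u)) \<psi> \<noteq> v" using q by simp
        then show ?thesis unfolding labelH_def by blast
      qed
    qed
  qed
  show "u \<notin> labelH a"
  proof
    assume "u \<in> labelH a"
    then obtain \<psi> where q: "\<psi> \<in> C" "a \<psi> \<noteq> v" "u = a \<psi>" by (auto simp: labelH_def)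
    then have "star_class u = \<psi>" using coord_nbr assms(1) by blast
    then show False using q assms by simp
  qed
qed

lemma labelH_surj: "transversal Z \<Longrightarrow> \<exists>a\<in>verts H. labelH a = Z"
proof -
  assume t: "transversal Z"
  have "finite Z" using transversal_finite t .
  then show ?thesis using t
  proof (induction Z rule: finite_induct)
    case empty then show ?case using vbar_in_H labelH_vbar by blast
  next
    case (insert u Z)
    have "transversal Z" using insert.prems transversal_subset by blast
    then obtain a where a: "a \<in> verts H" "labelH a = Z" using insert.IH by blast
    have u: "adj G v u" using insert.prems by (auto simp: transversal_def Nv_def)
    let ?\<phi> = "star_class u"
    have p: "?\<phi> \<in> C" using star_class_in_C u .
    have av: "a ?\<phi> = v"
    proof (rule ccontr)
      assume n: "a ?\<phi> \<noteq> v"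
      then have "a ?\<phi> \<in> Z" using a p by (auto simp: labelH_def)
      moreover have "star_class (a ?\<phi>) = ?\<phi>" using coord_nbr a p n by blast
      ultimately have "a ?\<phi> = u" using insert.prems unfolding transversal_def by blast
      then show False using \<open>a ?\<phi> \<in> Z\<close> insert.hyps by simp
    qed
    show ?case using labelH_upd[OF a(1) p av u refl] a by blast
  qed
qed

lemma add_one_labelH_if_coord_step:
  assumes xy: "x \<in> verts H" "y \<in> verts H" and p: "\<phi> \<in> C" and xy': "x \<phi> = v" "y \<phi> \<in> N_phi \<phi> v"
    and same: "\<forall>\<psi>\<in>C. \<psi> \<noteq> \<phi> \<longrightarrow> x \<psi> = y \<psi>"
  shows "add_one (labelH x) (labelH y)"
proof -
  have u: "adj G v (y \<phi>)" "star_class (y \<phi>) = \<phi>" using N_phi_iff p xy'(2) by auto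
  have "y = x(\<phi> := y \<phi>)"
  proof (rule PiE_ext[of y C "\<lambda>\<phi>. insert v (N_phi \<phi> v)"])
    show "y \<in> PiE C (\<lambda>\<phi>. insert v (N_phi \<phi> v))" using xy by (simp add: verts_H)
    show "x(\<phi> := y \<phi>) \<in> PiE C (\<lambda>\<phi>. insert v (N_phi \<phi> v))"
      using labelH_upd(1)[OF xy(1) p xy'(1) u] by (simp add: verts_H)
    fix \<psi> assume "\<psi> \<in> C" then show "y \<psi> = (x(\<phi> := y \<phi>)) \<psi>" using same by auto
  qed
  then have "labelH y = insert (y \<phi>) (labelH x)" using labelH_upd(2)[OF xy(1) p xy'(1) u] by metis
  then show ?thesis using labelH_upd(3)[OF xy(1) p xy'(1) u] by (auto simp: add_one_def)
qed

lemma adj_H_if_add_one_labelH: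
  assumes xy: "x \<in> verts H" "y \<in> verts H" "add_one (labelH x) (labelH y)"
  shows "adj H x y"
proof -
  obtain u where u: "u \<notin> labelH x" "labelH y = insert u (labelH x)" using xy(3) by (auto simp: add_one_def)
  then have "u \<in> labelH y" by simp
  then obtain \<phi> where q: "\<phi> \<in> C" "y \<phi> \<noteq> v" "u = y \<phi>" by (auto simp: labelH_def)
  have cu: "adj G v u" "star_class u = \<phi>" using coord_nbr xy(2) q by auto
  have xv: "x \<phi> = v"
  proof (rule ccontr)
    assume n: "x \<phi> \<noteq> v"
    then have "x \<phi> \<in> labelH y" using u q by (auto simp: labelH_def)
    then obtain \<psi> where r: "\<psi> \<in> C" "y \<psi> \<noteq> v" "x \<phi> = y \<psi>" by (auto simp: labelH_def)
    have "star_class (x \<phi>) = \<phi>" using coord_nbr xy(1) q(1) n by blast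
    moreover have "star_class (y \<psi>) = \<psi>" using coord_nbr xy(2) r by blast
    ultimately have "\<psi> = \<phi>" using r by simp
    then have "x \<phi> = u" using r q by simp
    then show False using n u(1) q(1) by (auto simp: labelH_def)
  qed
  have "y = x(\<phi> := u)"
    using labelH_inj[OF xy(2) labelH_upd(1)[OF xy(1) q(1) xv cu]] labelH_upd(2)[OF xy(1) q(1) xv cu] u by simp
  then show ?thesis unfolding adj_H_iff_coord using xy(1,2) q(1) xv N_phi_iff cu by auto
qed

lemma adj_H_iff:
  assumes "a \<in> verts H" "b \<in> verts H"
  shows "adj H a b \<longleftrightarrow> add_one (labelH a) (labelH b) \<or> add_one (labelH b) (labelH a)"
proof
  assume "adj H a b"
  then obtain \<phi> where p: "\<phi> \<in> C" "(a \<phi> = v \<and> b \<phi> \<in> N_phi \<phi> v) \<or> (b \<phi> = v \<and> a \<phi> \<in> N_phi \<phi> v)"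
     "\<forall>\<psi>\<in>C. \<psi> \<noteq> \<phi> \<longrightarrow> a \<psi> = b \<psi>" unfolding adj_H_iff_coord by blast
  then show "add_one (labelH a) (labelH b) \<or> add_one (labelH b) (labelH a)"
    using add_one_labelH_if_coord_step[OF assms p(1)] add_one_labelH_if_coord_step[OF assms(2,1) p(1)] by auto
qed (use adj_H_if_add_one_labelH assms adj_commute in metis)

lemma labelH_finite: "a \<in> verts H \<Longrightarrow> finite (labelH a)" using labelH_transversal transversal_finite by blast

lemma adj_H_verts: "adj H a b \<Longrightarrow> a \<in> verts H \<and> b \<in> verts H"
  using adj_H_iff_coord by blast

lemma walk_H_length_ge:
  assumes "walk H p"
  shows "card ((labelH (hd p) - labelH (last p)) \<union> (labelH (last p) - labelH (hd p))) \<le> length p - 1"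
  using assms
proof (induction p rule: induct_list012)
  case 1 then show ?case by (simp add: walk_def)
next
  case (2 x) then show ?case by simp
next
  case (3 x y zs)
  have w: "walk H (y # zs)" and a: "adj H x y" and xv: "x \<in> verts H" using 3(3) by (auto simp: walk_Cons_Cons_iff)
  have yv: "y \<in> verts H" using adj_H_verts a by blast
  have lv: "last (y # zs) \<in> verts H" using w by (auto simp: walk_def)
  have "card ((labelH x - labelH (last (y # zs))) \<union> (labelH (last (y # zs)) - labelH x))
       \<le> Suc (card ((labelH y - labelH (last (y # zs))) \<union> (labelH (last (y # zs)) - labelH y)))"
    by (rule card_symdiff_add_one) (use a adj_H_iff xv yv labelH_finite lv in auto)
  also have "\<dots> \<le> Suc (length (y # zs) - 1)" using 3(2)[OF w] by simp
  finally show ?case by simp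
qed

lemma dist_H_ge_label:
  "enat (card ((labelH a - labelH b) \<union> (labelH b - labelH a))) \<le> dist H a b"
  by (rule enat_le_dist) (use walk_H_length_ge in fastforce)

definition vertex_of :: "'a set \<Rightarrow> ('a set set \<Rightarrow> 'a)" where
  "vertex_of Z = (SOME a. a \<in> verts H \<and> labelH a = Z)"

lemma vertex_of_label: "transversal Z \<Longrightarrow> vertex_of Z \<in> verts H \<and> labelH (vertex_of Z) = Z"
  unfolding vertex_of_def using labelH_surj by (metis (mono_tags, lifting) someI_ex)

lemma vertex_of_labelH: "a \<in> verts H \<Longrightarrow> vertex_of (labelH a) = a"
  using vertex_of_label labelH_transversal labelH_inj by metis

lemma vertex_of_inj: "transversal X \<Longrightarrow> transversal Y \<Longrightarrow> vertex_of X = vertex_of Y \<longleftrightarrow> X = Y"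
  using vertex_of_label by metis

lemma adj_vertex_of: "transversal X \<Longrightarrow> transversal Y \<Longrightarrow> adj H (vertex_of X) (vertex_of Y) \<longleftrightarrow> add_one X Y \<or> add_one Y X"
  using vertex_of_label adj_H_iff by metis

lemma vertex_of_empty: "vertex_of {} = vbar"
  using vertex_of_labelH[OF vbar_in_H] labelH_vbar by simp

lemma transversal_singleton: "adj G v u \<Longrightarrow> transversal {u}" by (simp add: transversal_def Nv_def)
lemma transversal_pair: "adj G v u \<Longrightarrow> adj G v w \<Longrightarrow> star_class u \<noteq> star_class w \<Longrightarrow> transversal {u, w}"
  by (auto simp: transversal_def Nv_def)

lemma vertex_of_singleton: "adj G v u \<Longrightarrow> vertex_of {u} = vbar(star_class u := u)"
proof -
  assume u: "adj G v u"
  have c: "star_class u \<in> C" using star_class_in_C u .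
  have "vbar (star_class u) = v" using c by simp
  note U = labelH_upd[OF vbar_in_H c this u refl]
  have e1: "labelH (vbar(star_class u := u)) = {u}" by (simp only: U(2) labelH_vbar)
  show ?thesis using vertex_of_labelH[OF U(1)] e1 by metis
qed


definition gamma :: "'a \<Rightarrow> ('a set set \<Rightarrow> 'a)" where "gamma s = vertex_of (label s)"

lemma gamma_in_H: "s \<in> verts S \<Longrightarrow> gamma s \<in> verts H \<and> labelH (gamma s) = label s"
  unfolding gamma_def using vertex_of_label label_transversal by blast

lemma inj_on_gamma: "inj_on gamma (verts S)"
  by (rule inj_onI) (metis gamma_in_H label_inj)

lemma adj_gamma: "s \<in> verts S \<Longrightarrow> t \<in> verts S \<Longrightarrow> adj S s t \<longleftrightarrow> adj H (gamma s) (gamma t)"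
  using adj_S_iff adj_H_iff gamma_in_H by metis

lemma gamma_v: "gamma v = vbar"
  unfolding gamma_def using label_v vertex_of_empty by simp

lemma gamma_nbr: "adj G v u \<Longrightarrow> gamma u = vbar(star_class u := u)"
  unfolding gamma_def using label_nbr vertex_of_singleton by simp

lemma dist_gamma:
  assumes "s \<in> verts S" "t \<in> verts S"
  shows "dist H (gamma s) (gamma t) = dist S s t"
proof (rule antisym)
  show "dist H (gamma s) (gamma t) \<le> dist S s t"
    by (rule dist_hom_le) (use gamma_in_H adj_gamma in auto)
  have "dist S s t \<le> enat (card ((label s - label t) \<union> (label t - label s)))" using dist_S_le_label assms .
  also have "\<dots> \<le> dist H (gamma s) (gamma t)" using dist_H_ge_label gamma_in_H assms by metis
  finally show "dist S s t \<le> dist H (gamma s) (gamma t)" .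
qed

lemma v_in_S: "v \<in> verts S" by (simp add: verts_S)

lemma N2_vbar_eq: "N2 H vbar = gamma ` verts S"
proof
  show "N2 H vbar \<subseteq> gamma ` verts S"
  proof
    fix a assume "a \<in> N2 H vbar"
    then have a: "a \<in> verts H" "dist H vbar a \<le> 2" by (auto simp: N2_def)
    have "enat (card ((labelH vbar - labelH a) \<union> (labelH a - labelH vbar))) \<le> 2" using dist_H_ge_label[of vbar a] a(2) by simp
    then have "card (labelH a) \<le> 2" using labelH_vbar by (simp add: numeral_eq_enat)
    then obtain s where s: "s \<in> verts S" "label s = labelH a" using label_surj labelH_transversal a(1) by blast
    then have "gamma s = a" using gamma_in_H labelH_inj a(1) by metis
    then show "a \<in> gamma ` verts S" using s by blast
  qed
next
  show "gamma ` verts S \<subseteq> N2 H vbar"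
  proof
    fix a assume "a \<in> gamma ` verts S"
    then obtain s where s: "s \<in> verts S" "a = gamma s" by blast
    have "dist H vbar a = dist S v s" using dist_gamma[OF v_in_S s(1)] gamma_v s by simp
    also have "\<dots> \<le> enat (card ((label v - label s) \<union> (label s - label v)))" using dist_S_le_label v_in_S s(1) .
    also have "\<dots> \<le> 2" using label_transversal[OF s(1)] label_v by (simp add: numeral_eq_enat)
    finally show "a \<in> N2 H vbar" using gamma_in_H s by (auto simp: N2_def)
  qed
qed

lemma gamma_isometric_iso:
  "graph_iso gamma S (induced H (N2 H vbar)) \<and> gamma v = vbar \<and>
   (\<forall>\<phi>\<in>C. \<forall>u\<in>N_phi \<phi> v. gamma u = vbar(\<phi> := u)) \<and> isometric_emb gamma S H"
proof (intro conjI)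
  show "graph_iso gamma S (induced H (N2 H vbar))"
    unfolding graph_iso_def
  proof
    show "bij_betw gamma (verts S) (verts (induced H (N2 H vbar)))"
      using inj_on_gamma N2_vbar_eq by (simp add: induced_def bij_betw_def)
    show "\<forall>x\<in>verts S. \<forall>y\<in>verts S. adj S x y = adj (induced H (N2 H vbar)) (gamma x) (gamma y)"
    proof (intro ballI)
      fix x y assume xy: "x \<in> verts S" "y \<in> verts S"
      have "gamma x \<in> N2 H vbar" "gamma y \<in> N2 H vbar" using N2_vbar_eq xy by auto
      then have "adj (induced H (N2 H vbar)) (gamma x) (gamma y) \<longleftrightarrow> adj H (gamma x) (gamma y)"
        by (auto simp: adj_def induced_def)
      then show "adj S x y = adj (induced H (N2 H vbar)) (gamma x) (gamma y)" using adj_gamma xy by simp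
    qed
  qed
  show "gamma v = vbar" by (rule gamma_v)
  show "\<forall>\<phi>\<in>C. \<forall>u\<in>N_phi \<phi> v. gamma u = vbar(\<phi> := u)"
    using N_phi_iff gamma_nbr by auto
  show "isometric_emb gamma S H"
    unfolding isometric_emb_def using inj_on_gamma gamma_in_H dist_gamma by auto
qed

end

section \<open>The relations d_v^* and delta(H)\<close>

context pointed_graph
begin

definition base_edge :: "'a \<Rightarrow> ('a set set \<Rightarrow> 'a) set" where "base_edge u = {vertex_of {}, vertex_of {u}}"

lemma sq_tops_base_edges_same_class:
  assumes p: "adj G v p" and q: "adj G v q" and c: "star_class p = star_class q" and pq: "p \<noteq> q"
  shows "sq_tops H (vertex_of {}) (vertex_of {p}) (vertex_of {q}) = {}"
proof (rule ccontr)
  assume "sq_tops H (vertex_of {}) (vertex_of {p}) (vertex_of {q}) \<noteq> {}"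
  then obtain z where z: "z \<noteq> vertex_of {}" "adj H (vertex_of {p}) z" "adj H z (vertex_of {q})"
    by (auto simp: sq_tops_def)
  have tp: "transversal {p}" and tq: "transversal {q}" using transversal_singleton p q by auto
  have zH: "z \<in> verts H" using adj_H_verts z(2) by blast
  have tz: "transversal (labelH z)" using labelH_transversal zH .
  have zz: "z = vertex_of (labelH z)" using vertex_of_labelH zH by simp
  have i1: "add_one {p} (labelH z) \<or> add_one (labelH z) {p}" using adj_vertex_of[OF tp tz] z(2) zz by metis
  have i2: "add_one {q} (labelH z) \<or> add_one (labelH z) {q}" using adj_vertex_of[OF tq tz] z(3) zz adj_commute by metis
  have nz: "labelH z \<noteq> {}" using z(1) zz by auto
  have "p \<in> labelH z"
    using i1 nz by (auto simp: add_one_def)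
  moreover have "q \<in> labelH z"
    using i2 nz by (auto simp: add_one_def)
  ultimately show False using tz c pq by (auto simp: transversal_def)
qed

lemma delta_H_base_edges:
  assumes p: "adj G v p" and q: "adj G v q" and c: "star_class p = star_class q"
  shows "(base_edge p, base_edge q) \<in> delta H"
proof (cases "p = q")
  case True
  have "adj H (vertex_of {}) (vertex_of {p})" using adj_vertex_of transversal_singleton p add_one_empty by (metis transversal_subset empty_subsetI)
  then show ?thesis using True by (simp add: base_edge_def delta_refl edge_if_adj)
next
  case False
  have t0: "transversal {}" by (simp add: transversal_def)
  have tp: "transversal {p}" and tq: "transversal {q}" using transversal_singleton p q by auto
  have a1: "adj H (vertex_of {}) (vertex_of {p})" "adj H (vertex_of {}) (vertex_of {q})"
    using adj_vertex_of[OF t0 tp] adj_vertex_of[OF t0 tq] add_one_empty[of p] add_one_empty[of q] by blast+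
  have ne: "base_edge p \<noteq> base_edge q"
  proof
    assume "base_edge p = base_edge q"
    then have "vertex_of {p} = vertex_of {q} \<or> vertex_of {p} = vertex_of {}" by (auto simp: base_edge_def doubleton_eq_iff)
    then show False using vertex_of_inj[OF tp tq] vertex_of_inj[OF tp t0] False by auto
  qed
  have empty: "sq_tops H (vertex_of {}) (vertex_of {p}) (vertex_of {q}) = {}"
    using sq_tops_base_edges_same_class assms False by blast
  have e1: "{vertex_of {}, vertex_of {p}} \<in> edges H" "{vertex_of {}, vertex_of {q}} \<in> edges H"
    using edge_if_adj[OF a1(1)] edge_if_adj[OF a1(2)] by auto
  have ne': "{vertex_of {}, vertex_of {p}} \<noteq> {vertex_of {}, vertex_of {q}}" using ne by (simp add: base_edge_def)
  have nc: "\<not> (card (sq_tops H (vertex_of {}) (vertex_of {p}) (vertex_of {q})) = 1 \<and>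
      (\<forall>x\<in>sq_tops H (vertex_of {}) (vertex_of {p}) (vertex_of {q}). chordless_sq H (vertex_of {}) (vertex_of {p}) x (vertex_of {q})))"
    using empty by simp
  have "({vertex_of {}, vertex_of {p}}, {vertex_of {}, vertex_of {q}}) \<in> delta H"
    unfolding delta_def using e1 ne' a1 nc by blast
  then show ?thesis by (simp add: base_edge_def)
qed

lemma delta_H_square_base_edge:
  assumes u: "adj G v u" and a: "adj G v a" and c: "star_class a \<noteq> star_class u"
  shows "({vertex_of {a}, vertex_of {a, u}}, base_edge u) \<in> delta H"
proof -
  have t0: "transversal {}" by (simp add: transversal_def)
  have tu: "transversal {u}" and ta: "transversal {a}" using transversal_singleton u a by auto
  have tau: "transversal {a, u}" using transversal_pair a u c by blast
  have au: "a \<noteq> u" using c by auto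
  have adj1: "adj H (vertex_of {}) (vertex_of {u})" using adj_vertex_of[OF t0 tu] by (simp add: add_one_def)
  have adj2: "adj H (vertex_of {u}) (vertex_of {a, u})" using adj_vertex_of[OF tu tau] add_one_pair[OF au] by auto
  have adj3: "adj H (vertex_of {a, u}) (vertex_of {a})" using adj_vertex_of[OF tau ta] add_one_pair[OF au] by auto
  have adj4: "adj H (vertex_of {a}) (vertex_of {})" using adj_vertex_of[OF ta t0] by (simp add: add_one_def)
  have n1: "\<not> adj H (vertex_of {u}) (vertex_of {a})" using adj_vertex_of[OF tu ta] au
    by (auto simp: add_one_def)
  have n2: "\<not> adj H (vertex_of {}) (vertex_of {a, u})" using adj_vertex_of[OF t0 tau] au
    by (auto simp: add_one_def doubleton_eq_iff)
  have d: "distinct [vertex_of {}, vertex_of {u}, vertex_of {a, u}, vertex_of {a}]"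
    using vertex_of_inj[OF t0 tu] vertex_of_inj[OF t0 tau] vertex_of_inj[OF t0 ta] vertex_of_inj[OF tu tau] vertex_of_inj[OF tu ta]
      vertex_of_inj[OF tau ta] au by (auto simp: doubleton_eq_iff)
  have "chordless_sq H (vertex_of {}) (vertex_of {u}) (vertex_of {a, u}) (vertex_of {a})"
    unfolding chordless_sq_def using adj1 adj2 adj3 adj4 n1 n2 d by blast
  then have "opposite H {vertex_of {a, u}, vertex_of {a}} {vertex_of {}, vertex_of {u}}"
    unfolding opposite_def by blast
  moreover have "{vertex_of {a, u}, vertex_of {a}} \<in> edges H" "{vertex_of {}, vertex_of {u}} \<in> edges H"
    using edge_if_adj[OF adj3] edge_if_adj[OF adj1] by auto
  ultimately have "({vertex_of {a, u}, vertex_of {a}}, {vertex_of {}, vertex_of {u}}) \<in> delta H"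
    unfolding delta_def by blast
  then show ?thesis by (simp add: base_edge_def insert_commute)
qed

lemma edge_S_base_edge:
  assumes "e \<in> edges S"
  shows "\<exists>u. adj G v u \<and> (e, {v, u}) \<in> R \<and> (gamma ` e, base_edge u) \<in> delta H"
  using assms unfolding edges_S
proof
  assume "e \<in> {{v, u} |u. adj G v u}"
  then obtain u where u: "e = {v, u}" "adj G v u" by blast
  have "(e, {v, u}) \<in> R" using u R_refl adjD by blast
  moreover have "gamma ` e = base_edge u" using u gamma_def label_v label_nbr by (simp add: base_edge_def)
  moreover have "(base_edge u, base_edge u) \<in> delta H" using delta_H_base_edges u(2) by blast
  ultimately show ?thesis using u(2) by metis
next
  assume "e \<in> {f. \<exists>u x w. cross_square u x w \<and> (f = {u, x} \<or> f = {x, w})}"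
  then obtain u x w where p: "cross_square u x w" "e = {u, x} \<or> e = {x, w}" by blast
  have one: "\<exists>u. adj G v u \<and> ({a, x}, {v, u}) \<in> R \<and> (gamma ` {a, x}, base_edge u) \<in> delta H"
    if pp: "cross_square a x b" for a b
  proof -
    note d = cross_squareD[OF pp]
    have "({v, b}, {x, a}) \<in> R" using chordless_sq_opposite_R(2) pp by (simp add: cross_square_def)
    then have r: "({a, x}, {v, b}) \<in> R" using R_sym by (simp add: insert_commute)
    have g: "gamma ` {a, x} = {vertex_of {a}, vertex_of {a, b}}"
      using label_top[OF pp] label_nbr d by (simp add: gamma_def)
    have "({vertex_of {a}, vertex_of {a, b}}, base_edge b) \<in> delta H" using delta_H_square_base_edge d by blast
    then show ?thesis using r g d by metis
  qed
  from p(2) show ?thesis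
  proof
    assume "e = {u, x}" then show ?thesis using one[OF p(1)] by simp
  next
    assume "e = {x, w}" then show ?thesis using one[of w u] p(1) cross_square_commute by (simp add: insert_commute)
  qed
qed

lemma gamma_d_restr_subset_trancl:
  "{(gamma ` e, gamma ` f) | e f. (e, f) \<in> d_restr G v} \<subseteq> (delta H)\<^sup>+"
proof
  fix z assume "z \<in> {(gamma ` e, gamma ` f) | e f. (e, f) \<in> d_restr G v}"
  then obtain e f where z: "z = (gamma ` e, gamma ` f)" "(e, f) \<in> R" "e \<in> edges S" "f \<in> edges S"
    by (auto simp: d_restr_def)
  obtain u where u: "adj G v u" "(e, {v, u}) \<in> R" "(gamma ` e, base_edge u) \<in> delta H"
    using edge_S_base_edge z(3) by blast
  obtain w where w: "adj G v w" "(f, {v, w}) \<in> R" "(gamma ` f, base_edge w) \<in> delta H"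
    using edge_S_base_edge z(4) by blast
  have "({v, u}, {v, w}) \<in> R" using u(2) w(2) z(2) R_sym R_trans by blast
  then have "star_class u = star_class w" using star_class_eq_iff u(1) w(1) by blast
  then have "(base_edge u, base_edge w) \<in> delta H" using delta_H_base_edges u(1) w(1) by blast
  then have "(gamma ` e, gamma ` f) \<in> (delta H)\<^sup>+"
    using u(3) delta_sym[OF w(3)] by (meson trancl.r_into_trancl trancl_trans)
  then show "z \<in> (delta H)\<^sup>+" using z(1) by simp
qed


lemma R_class_eq: "(e, {v, u}) \<in> R \<Longrightarrow> R `` {e} = star_class u"
  unfolding star_class_def using equiv_R equiv_class_eq by metis

lemma d_restr_class: "e \<in> edges S \<Longrightarrow> d_restr G v `` {e} = R `` {e} \<inter> edges S"
  by (auto simp: d_restr_def)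

lemma d_restr_quotient_eq: "edges S // d_restr G v = (\<lambda>\<phi>. \<phi> \<inter> edges S) ` C"
proof
  show "edges S // d_restr G v \<subseteq> (\<lambda>\<phi>. \<phi> \<inter> edges S) ` C"
  proof
    fix Q assume "Q \<in> edges S // d_restr G v"
    then obtain e where e: "e \<in> edges S" "Q = d_restr G v `` {e}" by (auto simp: quotient_def)
    obtain u where u: "adj G v u" "(e, {v, u}) \<in> R" using edge_S_base_edge e(1) by blast
    have "Q = star_class u \<inter> edges S" using e d_restr_class R_class_eq u(2) by simp
    then show "Q \<in> (\<lambda>\<phi>. \<phi> \<inter> edges S) ` C" using star_class_in_C u(1) by blast
  qed
  show "(\<lambda>\<phi>. \<phi> \<inter> edges S) ` C \<subseteq> edges S // d_restr G v"
  proof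
    fix Q assume "Q \<in> (\<lambda>\<phi>. \<phi> \<inter> edges S) ` C"
    then obtain \<phi> where p: "\<phi> \<in> C" "Q = \<phi> \<inter> edges S" by blast
    obtain u where u: "adj G v u" "star_class u = \<phi>" using star_class_witness p(1) by blast
    have e: "{v, u} \<in> edges S" using u(1) by (auto simp: edges_S)
    have "({v, u}, {v, u}) \<in> R" using R_refl adjD u(1) by blast
    then have "d_restr G v `` {{v, u}} = Q" using d_restr_class[OF e] R_class_eq p u by simp
    then show "Q \<in> edges S // d_restr G v" using e by (auto simp: quotient_def)
  qed
qed

lemma inj_on_Int_edges_S: "inj_on (\<lambda>\<phi>. \<phi> \<inter> edges S) C"
proof (rule inj_onI)
  fix \<phi> \<phi>' assume a: "\<phi> \<in> C" "\<phi>' \<in> C" "\<phi> \<inter> edges S = \<phi>' \<inter> edges S"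
  obtain u where u: "adj G v u" "star_class u = \<phi>" using star_class_witness a(1) by blast
  obtain w where w: "adj G v w" "star_class w = \<phi>'" using star_class_witness a(2) by blast
  have "{v, u} \<in> edges S" using u(1) by (auto simp: edges_S)
  moreover have "{v, u} \<in> star_class u" using R_refl adjD u(1) by (auto simp: star_class_def)
  ultimately have "{v, u} \<in> star_class w" using a(3) u(2) w(2) by blast
  then have "({v, w}, {v, u}) \<in> R" by (simp add: star_class_def)
  then have "star_class w = star_class u" using star_class_eq_iff u(1) w(1) by blast
  then show "\<phi> = \<phi>'" using u w by simp
qed

lemma card_d_restr_quotient: "card (edges S // d_restr G v) = card C"
  using d_restr_quotient_eq card_image[OF inj_on_Int_edges_S] by simp

end

section \<open>A prime factorization of H\<close>

context pointed_graph
begin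

abbreviation "sf \<equiv> (\<lambda>\<phi>. star_factor \<phi> v)"

lemma finite_star_verts: "\<phi> \<in> C \<Longrightarrow> finite (insert v (N_phi \<phi> v))"
  using finite_Nv N_phi_iff by (auto simp: Nv_def intro: rev_finite_subset)

lemma verts_star_factor: "verts (sf \<phi>) = insert v (N_phi \<phi> v)" by (simp add: star_factor_def)

lemma simple_star_product:
  assumes "J \<subseteq> C" "finite J"
  shows "simple_graph (cart_prod J sf)"
proof (rule simple_cart_prod)
  fix \<phi> assume "\<phi> \<in> J"
  then show "finite (verts (sf \<phi>))" using assms(1) finite_star_verts by (auto simp: verts_star_factor)
qed (rule assms(2))

lemma prime_star_factor:
  assumes p: "\<phi> \<in> C"
  shows "prime_graph (cart_prod {\<phi>} sf)"
proof (rule prime_graph_if_universal_vertex)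
  let ?Q = "cart_prod {\<phi>} sf"
  let ?c = "restrict (\<lambda>_. v) {\<phi>}"
  have VQ: "verts ?Q = PiE {\<phi>} (\<lambda>i. insert v (N_phi i v))"
    by (simp add: verts_cart_prod verts_star_factor)
  show "?c \<in> verts ?Q" using VQ by auto
  show "simple_graph ?Q" using simple_star_product p by simp
  show "adj ?Q x ?c" if x: "x \<in> verts ?Q" "x \<noteq> ?c" for x
  proof -
    have "x \<phi> \<noteq> v"
    proof
      assume "x \<phi> = v"
      then have "x = ?c" using x(1) VQ by (intro PiE_ext[of x "{\<phi>}" "\<lambda>i. insert v (N_phi i v)"]) auto
      then show False using x(2) by simp
    qed
    then have "x \<phi> \<in> N_phi \<phi> v" using x VQ by auto
    then show ?thesis
      unfolding adj_cart_prod_singleton_iff using x VQ adj_star_factor_iff[OF p] by (auto simp: verts_star_factor)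
  qed
  show "card (verts ?Q) \<ge> 2"
  proof -
    obtain u where u: "adj G v u" "star_class u = \<phi>" using star_class_witness p by blast
    let ?l = "restrict (\<lambda>_. u) {\<phi>}"
    have "?l \<in> verts ?Q" using VQ N_phi_iff p u by auto
    moreover have "?l \<noteq> ?c" using u adjD by (metis restrict_apply' singletonI)
    moreover have "finite (verts ?Q)"
      unfolding VQ by (intro finite_PiE) (use finite_star_verts[OF p] in auto)
    ultimately have "card {?l, ?c} \<le> card (verts ?Q)" using VQ by (intro card_mono) auto
    then show ?thesis using \<open>?l \<noteq> ?c\<close> by simp
  qed
qed

lemma card_verts_star_product_ne_1:
  assumes J: "J \<subseteq> C" "finite J" and p: "\<phi> \<in> J"
  shows "card (verts (cart_prod J sf)) \<noteq> 1"
proof -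
  obtain u where u: "adj G v u" "star_class u = \<phi>" using star_class_witness J p by blast
  let ?x = "\<lambda>_\<in>J. v" and ?y = "(\<lambda>_\<in>J. v)(\<phi> := u)"
  have "u \<in> N_phi \<phi> v" using N_phi_iff J p u by blast
  then have sub: "{?x, ?y} \<subseteq> verts (cart_prod J sf)"
    using p by (auto simp: verts_cart_prod verts_star_factor PiE_iff extensional_def)
  have fin: "finite (verts (cart_prod J sf))"
    using simple_star_product[OF J] by (simp add: simple_graph_def)
  have "?x \<phi> \<noteq> ?y \<phi>" using u adjD p by simp
  then have "card {?x, ?y} = 2" by (metis card_2_iff)
  then have "2 \<le> card (verts (cart_prod J sf))" using card_mono[OF fin sub] by simp
  then show ?thesis by simp
qed

lemma is_PFD_exists: "\<exists>I Gs \<psi>. is_PFD H I Gs \<psi>"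
proof -
  obtain en where en: "bij_betw en {0..<card C} C" using ex_bij_betw_nat_finite finite_C by blast
  let ?Gs = "\<lambda>n. cart_prod {en n} sf"
  have g: "graph_iso (\<lambda>h. \<lambda>n\<in>{0..<card C}. restrict h {en n}) H (cart_prod {0..<card C} ?Gs)"
    by (rule graph_iso_regroup[OF en])
  have pr: "\<forall>i\<in>{0..<card C}. prime_graph (?Gs i)"
  proof
    fix i assume "i \<in> {0..<card C}"
    then have "en i \<in> C" using en bij_betwE by blast
    then show "prime_graph (?Gs i)" by (rule prime_star_factor)
  qed
  have "is_PFD H {0..<card C} ?Gs (\<lambda>h. \<lambda>n\<in>{0..<card C}. restrict h {en n})"
    unfolding is_PFD_def using g pr by simp
  then show ?thesis by blast
qed

lemma edge_H_adj: "e \<in> edges H \<Longrightarrow> \<exists>a b. adj H a b \<and> e = {a, b}"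
proof -
  assume "e \<in> edges H"
  then obtain f g where fg: "e = {f, g}" "\<exists>i\<in>C. adj (sf i) (f i) (g i)" by (auto simp: cart_prod_def)
  then have "f \<noteq> g" by (auto simp: adj_def)
  then have "adj H f g" using fg \<open>e \<in> edges H\<close> by (simp add: adj_def)
  then show ?thesis using fg by blast
qed

end

section \<open>The coordinates of the star classes\<close>

locale H_PFD = pointed_graph G v for G :: "'a graph" and v :: 'a +
  fixes I :: "nat set" and Gs :: "nat \<Rightarrow> ('a set set \<Rightarrow> 'a) graph" and \<psi> :: "('a set set \<Rightarrow> 'a) \<Rightarrow> nat \<Rightarrow> ('a set set \<Rightarrow> 'a)"
  assumes pfd: "is_PFD (cart_prod (star_classes G v) (\<lambda>\<phi>. star_factor \<phi> v)) I Gs \<psi>"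
begin

sublocale product_iso "cart_prod (star_classes G v) (\<lambda>\<phi>. star_factor \<phi> v)" I Gs \<psi>
proof
  show "graph_iso \<psi> H (cart_prod I Gs)" using pfd by (simp add: is_PFD_def)
  show "\<And>a b. adj H a b \<Longrightarrow> a \<in> verts H \<and> b \<in> verts H" using adj_H_verts by blast
  show "\<And>e. e \<in> edges H \<Longrightarrow> \<exists>a b. adj H a b \<and> e = {a, b}" using edge_H_adj by blast
qed

text \<open>Adding u to a label moves along the coordinate of the edge from vbar to vertex_of {u}:
  the two steps adding u and y span a square, and opposite edges of a square share their
  coordinate.\<close>

lemma edge_coord_insert:
  assumes "finite X"
  shows "transversal (insert u X) \<Longrightarrow> u \<notin> X \<Longrightarrow> adj H (vertex_of X) (vertex_of (insert u X)) \<and> edge_coord (vertex_of X) (vertex_of (insert u X)) = edge_coord (vertex_of {}) (vertex_of {u})"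
  using assms
proof (induction X arbitrary: u rule: finite_induct)
  case empty
  have "transversal {}" "transversal {u}" using empty transversal_subset by auto
  then have "adj H (vertex_of {}) (vertex_of {u})" using adj_vertex_of by (simp add: add_one_def)
  then show ?case by simp
next
  case (insert y X)
  have t_uyX: "transversal (insert u (insert y X))" using insert.prems(1) .
  have uy: "u \<noteq> y" "u \<notin> X" using insert.prems(2) by auto
  have t1: "transversal X" "transversal (insert u X)" "transversal (insert y X)" using t_uyX transversal_subset by (blast, blast, blast)
  have IH: "adj H (vertex_of X) (vertex_of (insert u X)) \<and> edge_coord (vertex_of X) (vertex_of (insert u X)) = edge_coord (vertex_of {}) (vertex_of {u})"
    using insert.IH[OF t1(2) uy(2)] .
  have a2: "adj H (vertex_of (insert u X)) (vertex_of (insert u (insert y X)))"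
    using adj_vertex_of[OF t1(2) t_uyX] insert.hyps(2) uy by (auto simp: add_one_def insert_commute)
  have a3: "adj H (vertex_of (insert u (insert y X))) (vertex_of (insert y X))"
    using adj_vertex_of[OF t_uyX t1(3)] insert.prems(2) by (auto simp: add_one_def)
  have a4: "adj H (vertex_of (insert y X)) (vertex_of X)"
    using adj_vertex_of[OF t1(3) t1(1)] insert.hyps(2) by (auto simp: add_one_def)
  have "X \<noteq> insert u (insert y X)" using insert.hyps(2) by blast
  then have ne1: "vertex_of X \<noteq> vertex_of (insert u (insert y X))" using vertex_of_inj[OF t1(1) t_uyX] by simp
  have ne2: "vertex_of (insert u X) \<noteq> vertex_of (insert y X)" using vertex_of_inj[OF t1(2) t1(3)] uy insert.hyps(2) by auto
  have "edge_coord (vertex_of X) (vertex_of (insert u X)) = edge_coord (vertex_of (insert u (insert y X))) (vertex_of (insert y X))"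
    using four_cycle_edge_coord[OF conjunct1[OF IH] a2 a3 a4 ne1 ne2] .
  then have "edge_coord (vertex_of (insert y X)) (vertex_of (insert u (insert y X))) = edge_coord (vertex_of {}) (vertex_of {u})"
    using IH edge_coord_commute[OF a3] by simp
  moreover have "adj H (vertex_of (insert y X)) (vertex_of (insert u (insert y X)))" using a3 adj_commute by metis
  ultimately show ?case by simp
qed

lemma edge_coord_same_class:
  assumes "adj G v p" "adj G v q" "star_class p = star_class q"
  shows "edge_coord (vertex_of {}) (vertex_of {p}) = edge_coord (vertex_of {}) (vertex_of {q})"
proof -
  have "(base_edge p, base_edge q) \<in> coord_rel H I \<psi>" using delta_H_base_edges[OF assms] delta_subset_coord_rel by blast
  moreover have "adj H (vertex_of {}) (vertex_of {p})" "adj H (vertex_of {}) (vertex_of {q})"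
    using edge_coord_insert[of "{}"] transversal_singleton assms by auto
  ultimately show ?thesis using coord_rel_iff by (simp add: base_edge_def)
qed

definition class_coord :: "'a set set \<Rightarrow> nat" where
  "class_coord \<phi> = edge_coord (vertex_of {}) (vertex_of {SOME u. adj G v u \<and> star_class u = \<phi>})"

lemma class_coord_eq: "adj G v u \<Longrightarrow> class_coord (star_class u) = edge_coord (vertex_of {}) (vertex_of {u})"
proof -
  assume u: "adj G v u"
  let ?u = "SOME w. adj G v w \<and> star_class w = star_class u"
  have "adj G v ?u \<and> star_class ?u = star_class u" by (rule someI[of _ u]) (use u in simp)
  then show ?thesis unfolding class_coord_def using edge_coord_same_class u by metis
qed

lemma adj_H_class_coord:
  assumes "adj H a b"
  shows "\<exists>u. adj G v u \<and> edge_coord a b = class_coord (star_class u) \<and>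
     ((labelH b = insert u (labelH a) \<and> u \<notin> labelH a) \<or> (labelH a = insert u (labelH b) \<and> u \<notin> labelH b))"
proof -
  have ab: "a \<in> verts H" "b \<in> verts H" using adj_H_verts assms by auto
  have one: "\<exists>u. adj G v u \<and> edge_coord x y = class_coord (star_class u) \<and> labelH y = insert u (labelH x) \<and> u \<notin> labelH x"
    if xy: "x \<in> verts H" "y \<in> verts H" "add_one (labelH x) (labelH y)" for x y
  proof -
    obtain u where u: "u \<notin> labelH x" "labelH y = insert u (labelH x)" using xy(3) by (auto simp: add_one_def)
    have tvy: "transversal (insert u (labelH x))" using labelH_transversal[OF xy(2)] u(2) by simp
    then have uadj: "adj G v u" by (auto simp: transversal_def Nv_def)
    have "edge_coord (vertex_of (labelH x)) (vertex_of (insert u (labelH x))) = edge_coord (vertex_of {}) (vertex_of {u})"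
      using edge_coord_insert[OF labelH_finite[OF xy(1)] tvy u(1)] by simp
    then have "edge_coord x y = class_coord (star_class u)" using vertex_of_labelH xy u(2) class_coord_eq[OF uadj] by metis
    then show ?thesis using u uadj by blast
  qed
  from adj_H_iff[OF ab] assms have "add_one (labelH a) (labelH b) \<or> add_one (labelH b) (labelH a)" by simp
  then show ?thesis
  proof
    assume "add_one (labelH a) (labelH b)" then show ?thesis using one ab by blast
  next
    assume "add_one (labelH b) (labelH a)"
    then obtain u where "adj G v u" "edge_coord b a = class_coord (star_class u)" "labelH a = insert u (labelH b)" "u \<notin> labelH b"
      using one ab by blast
    then show ?thesis using edge_coord_commute[OF assms] by metis
  qed
qed

lemma class_coord_base: "\<phi> \<in> C \<Longrightarrow> \<exists>u. adj G v u \<and> star_class u = \<phi> \<and> adj H (vertex_of {}) (vertex_of {u}) \<and> edge_coord (vertex_of {}) (vertex_of {u}) = class_coord \<phi>"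
proof -
  assume p: "\<phi> \<in> C"
  then obtain u where u: "adj G v u" "star_class u = \<phi>" using star_class_witness by blast
  have "adj H (vertex_of {}) (vertex_of {u})" using edge_coord_insert[of "{}" u] transversal_singleton u by simp
  then show ?thesis using u class_coord_eq by metis
qed

definition coord_edges :: "nat \<Rightarrow> ('a set set \<Rightarrow> 'a) set set" where
  "coord_edges i = {f. \<exists>c d. adj H c d \<and> f = {c, d} \<and> edge_coord c d = i}"

lemma edge_coord_doubleton: "adj H a b \<Longrightarrow> adj H c d \<Longrightarrow> {a, b} = {c, d} \<Longrightarrow> edge_coord a b = edge_coord c d"
  using edge_coord_commute by (auto simp: doubleton_eq_iff)

lemma coord_rel_class: "adj H a b \<Longrightarrow> coord_rel H I \<psi> `` {{a, b}} = coord_edges (edge_coord a b)"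
proof -
  assume ab: "adj H a b"
  show ?thesis
  proof
    show "coord_rel H I \<psi> `` {{a, b}} \<subseteq> coord_edges (edge_coord a b)"
    proof
      fix f assume "f \<in> coord_rel H I \<psi> `` {{a, b}}"
      then have f: "({a, b}, f) \<in> coord_rel H I \<psi>" by simp
      then have "f \<in> edges H" by (auto simp: coord_rel_def)
      then obtain c d where cd: "adj H c d" "f = {c, d}" using edge_H_adj by blast
      then have "edge_coord a b = edge_coord c d" using coord_rel_iff ab f by simp
      then show "f \<in> coord_edges (edge_coord a b)" using cd by (auto simp: coord_edges_def)
    qed
    show "coord_edges (edge_coord a b) \<subseteq> coord_rel H I \<psi> `` {{a, b}}"
    proof
      fix f assume "f \<in> coord_edges (edge_coord a b)"
      then obtain c d where cd: "adj H c d" "f = {c, d}" "edge_coord c d = edge_coord a b" by (auto simp: coord_edges_def)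
      then show "f \<in> coord_rel H I \<psi> `` {{a, b}}" using coord_rel_iff ab by simp
    qed
  qed
qed

lemma coord_rel_quotient_eq: "edges H // coord_rel H I \<psi> = coord_edges ` class_coord ` C"
proof
  show "edges H // coord_rel H I \<psi> \<subseteq> coord_edges ` class_coord ` C"
  proof
    fix Q assume "Q \<in> edges H // coord_rel H I \<psi>"
    then obtain e where e: "e \<in> edges H" "Q = coord_rel H I \<psi> `` {e}" by (auto simp: quotient_def)
    then obtain a b where ab: "adj H a b" "e = {a, b}" using edge_H_adj by blast
    obtain u where u: "adj G v u" "edge_coord a b = class_coord (star_class u)" using adj_H_class_coord[OF ab(1)] by blast
    have "Q = coord_edges (class_coord (star_class u))" using coord_rel_class ab e u by simp
    then show "Q \<in> coord_edges ` class_coord ` C" using star_class_in_C u(1) by blast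
  qed
  show "coord_edges ` class_coord ` C \<subseteq> edges H // coord_rel H I \<psi>"
  proof
    fix Q assume "Q \<in> coord_edges ` class_coord ` C"
    then obtain \<phi> where p: "\<phi> \<in> C" "Q = coord_edges (class_coord \<phi>)" by blast
    obtain u where u: "adj H (vertex_of {}) (vertex_of {u})" "edge_coord (vertex_of {}) (vertex_of {u}) = class_coord \<phi>" using class_coord_base p by blast
    have "Q = coord_rel H I \<psi> `` {{vertex_of {}, vertex_of {u}}}" using coord_rel_class[OF u(1)] u p by simp
    moreover have "{vertex_of {}, vertex_of {u}} \<in> edges H" using u(1) by (simp add: adj_def)
    ultimately show "Q \<in> edges H // coord_rel H I \<psi>" by (auto simp: quotient_def)
  qed
qed

lemma inj_on_coord_edges: "inj_on coord_edges (class_coord ` C)"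
proof (rule inj_onI)
  fix i j assume ij: "i \<in> class_coord ` C" "j \<in> class_coord ` C" "coord_edges i = coord_edges j"
  then obtain \<phi> where p: "\<phi> \<in> C" "i = class_coord \<phi>" by blast
  obtain u where u: "adj H (vertex_of {}) (vertex_of {u})" "edge_coord (vertex_of {}) (vertex_of {u}) = class_coord \<phi>" using class_coord_base p by blast
  have "{vertex_of {}, vertex_of {u}} \<in> coord_edges i" using u p by (auto simp: coord_edges_def)
  then have "{vertex_of {}, vertex_of {u}} \<in> coord_edges j" using ij by simp
  then obtain c d where cd: "adj H c d" "{vertex_of {}, vertex_of {u}} = {c, d}" "edge_coord c d = j" by (auto simp: coord_edges_def)
  then show "i = j" using edge_coord_doubleton[OF u(1) cd(1) cd(2)] u p by simp
qed

lemma card_coord_rel_quotient_if_inj: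
  assumes "inj_on class_coord C"
  shows "card (edges H // coord_rel H I \<psi>) = card C"
  using card_image[OF inj_on_coord_edges] card_image[OF assms] coord_rel_quotient_eq by simp

end

section \<open>Distinct star classes have distinct coordinates\<close>

text \<open>Assuming two distinct star classes with the same coordinate i0, the layer of H spanned by
  the classes of coordinate i0 is isomorphic both to the prime factor Gs i0 (via fibre) and to
  the nontrivial product P2 (via split_layer).\<close>

locale merged_classes = H_PFD G v I Gs \<psi>
  for G :: "'a graph" and v :: 'a and I Gs \<psi> +
  fixes \<phi>1 \<phi>2 :: "'a set set"
  assumes p1: "\<phi>1 \<in> star_classes G v" and p2: "\<phi>2 \<in> star_classes G v"
    and ne12: "\<phi>1 \<noteq> \<phi>2" and eq12: "class_coord \<phi>1 = class_coord \<phi>2"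
begin

definition "i0 = class_coord \<phi>1"
definition "merged = {\<phi> \<in> C. class_coord \<phi> = i0}"
definition "layer = {a \<in> verts H. \<forall>\<phi>\<in>C. \<phi> \<notin> merged \<longrightarrow> a \<phi> = v}"
abbreviation "psi_vbar \<equiv> \<psi> vbar"
definition "psi_inv Y = inv_into (verts H) \<psi> Y"
abbreviation "PV \<equiv> PiE I (\<lambda>i. verts (Gs i))"

lemma i0_in_I: "i0 \<in> I"
proof -
  obtain u where u: "adj H (vertex_of {}) (vertex_of {u})" "edge_coord (vertex_of {}) (vertex_of {u}) = class_coord \<phi>1" using class_coord_base p1 by blast
  then show ?thesis using edge_coord_props(1)[OF u(1)] by (simp add: i0_def)
qed

lemma merged_subset_C: "merged \<subseteq> C" by (auto simp: merged_def)
lemma merged_phis: "\<phi>1 \<in> merged" "\<phi>2 \<in> merged" using p1 p2 eq12 by (auto simp: merged_def i0_def)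

lemma layer_iff_labelH: "a \<in> verts H \<Longrightarrow> a \<in> layer \<longleftrightarrow> star_class ` labelH a \<subseteq> merged"
proof
  assume a: "a \<in> verts H" "a \<in> layer"
  show "star_class ` labelH a \<subseteq> merged"
  proof
    fix c assume "c \<in> star_class ` labelH a"
    then obtain \<phi> where p: "\<phi> \<in> C" "a \<phi> \<noteq> v" "c = star_class (a \<phi>)" by (auto simp: labelH_def)
    then have "c = \<phi>" using coord_nbr a(1) by simp
    then show "c \<in> merged" using a(2) p by (auto simp: layer_def)
  qed
next
  assume a: "a \<in> verts H" "star_class ` labelH a \<subseteq> merged"
  show "a \<in> layer" unfolding layer_def
  proof (intro CollectI conjI ballI impI)
    show "a \<in> verts H" using a(1) .
    fix \<phi> assume p: "\<phi> \<in> C" "\<phi> \<notin> merged"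
    show "a \<phi> = v"
    proof (rule ccontr)
      assume n: "a \<phi> \<noteq> v"
      then have "a \<phi> \<in> labelH a" using p by (auto simp: labelH_def)
      moreover have "star_class (a \<phi>) = \<phi>" using coord_nbr a(1) p(1) n by blast
      ultimately show False using a(2) p(2) by blast
    qed
  qed
qed

lemma layer_in_H: "a \<in> layer \<Longrightarrow> a \<in> verts H" by (simp add: layer_def)

lemma vbar_in_layer: "vbar \<in> layer" using vbar_in_H by (auto simp: layer_def)

lemma psi_vertex_of_off_i0:
  assumes "finite X"
  shows "transversal X \<Longrightarrow> star_class ` X \<subseteq> merged \<Longrightarrow> j \<noteq> i0 \<Longrightarrow> \<psi> (vertex_of X) j = \<psi> (vertex_of {}) j"
  using assms
proof (induction X rule: finite_induct)
  case empty then show ?case by simp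
next
  case (insert u X)
  have t: "transversal X" using insert.prems(1) transversal_subset by blast
  have uadj: "adj G v u" using insert.prems(1) by (auto simp: transversal_def Nv_def)
  note e = edge_coord_insert[OF insert.hyps(1) insert.prems(1) insert.hyps(2)]
  have "edge_coord (vertex_of X) (vertex_of (insert u X)) = i0"
    using e class_coord_eq[OF uadj] insert.prems(2) by (auto simp: merged_def)
  then have "\<psi> (vertex_of X) j = \<psi> (vertex_of (insert u X)) j" using edge_coord_props(3)[OF conjunct1[OF e]] insert.prems(3) by metis
  then show ?case using insert.IH[OF t _ insert.prems(3)] insert.prems(2) by simp
qed

lemma psi_layer_off_i0: "a \<in> layer \<Longrightarrow> j \<noteq> i0 \<Longrightarrow> \<psi> a j = psi_vbar j"
proof -
  assume a: "a \<in> layer" "j \<noteq> i0"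
  have aH: "a \<in> verts H" using a layer_in_H by blast
  have "\<psi> (vertex_of (labelH a)) j = \<psi> (vertex_of {}) j"
    using psi_vertex_of_off_i0[OF labelH_finite[OF aH] labelH_transversal[OF aH]] layer_iff_labelH aH a by blast
  then show ?thesis using vertex_of_labelH[OF aH] vertex_of_empty by simp
qed

lemma psi_vbar_in_P: "psi_vbar \<in> PV" using psi_P vbar_in_H by blast

lemma psi_layer_eq_upd: "a \<in> layer \<Longrightarrow> psi_vbar(i0 := \<psi> a i0) = \<psi> a"
proof
  fix j assume a: "a \<in> layer"
  show "(psi_vbar(i0 := \<psi> a i0)) j = \<psi> a j"
    by (cases "j = i0") (use psi_layer_off_i0[OF a] in auto)
qed

lemma psi_inv_props: "Y \<in> PV \<Longrightarrow> psi_inv Y \<in> verts H \<and> \<psi> (psi_inv Y) = Y"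
proof -
  assume Y: "Y \<in> PV"
  then have "Y \<in> \<psi> ` verts H" using psi_bij by (simp add: bij_betw_def)
  then show ?thesis unfolding psi_inv_def by (simp add: inv_into_into f_inv_into_f)
qed

lemma psi_inv_psi: "a \<in> verts H \<Longrightarrow> psi_inv (\<psi> a) = a"
  unfolding psi_inv_def using psi_bij by (simp add: bij_betw_def)

lemma prime_Gs_i0: "prime_graph (Gs i0)" using pfd i0_in_I by (simp add: is_PFD_def)

lemma adj_Gs_i0_verts: "adj (Gs i0) x y \<Longrightarrow> x \<in> verts (Gs i0) \<and> y \<in> verts (Gs i0)"
proof -
  assume a: "adj (Gs i0) x y"
  have s: "simple_graph (Gs i0)" using prime_Gs_i0 by (simp add: prime_graph_def)
  have "{x, y} \<in> edges (Gs i0)" "x \<noteq> y" using a by (auto simp: adj_def)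
  then show ?thesis using s by (auto simp: simple_graph_def doubleton_eq_iff)
qed

lemma psi_vbar_upd_in_P: "y \<in> verts (Gs i0) \<Longrightarrow> psi_vbar(i0 := y) \<in> PV"
  using psi_vbar_in_P i0_in_I by (auto simp: PiE_iff extensional_def)

lemma adj_psi_vbar_upd: "y \<in> verts (Gs i0) \<Longrightarrow> y' \<in> verts (Gs i0) \<Longrightarrow>
   adj P (psi_vbar(i0 := y)) (psi_vbar(i0 := y')) \<longleftrightarrow> adj (Gs i0) y y'"
proof
  assume y: "y \<in> verts (Gs i0)" "y' \<in> verts (Gs i0)" and a: "adj P (psi_vbar(i0 := y)) (psi_vbar(i0 := y'))"
  then obtain i where i: "i \<in> I" "adj (Gs i) ((psi_vbar(i0 := y)) i) ((psi_vbar(i0 := y')) i)"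
    using adj_product_coord by blast
  show "adj (Gs i0) y y'"
  proof (cases "i = i0")
    case True then show ?thesis using i by simp
  next
    case False then have "adj (Gs i) (psi_vbar i) (psi_vbar i)" using i by simp
    then show ?thesis by (simp add: adj_def)
  qed
next
  assume y: "y \<in> verts (Gs i0)" "y' \<in> verts (Gs i0)" and a: "adj (Gs i0) y y'"
  show "adj P (psi_vbar(i0 := y)) (psi_vbar(i0 := y'))"
    unfolding adj_cart_prod_iff using psi_vbar_upd_in_P[OF y(1)] psi_vbar_upd_in_P[OF y(2)] a i0_in_I by auto
qed

definition "fibre y = psi_inv (psi_vbar(i0 := y))"

lemma fibre_props: "y \<in> verts (Gs i0) \<Longrightarrow> fibre y \<in> verts H \<and> \<psi> (fibre y) = psi_vbar(i0 := y)"
  unfolding fibre_def using psi_inv_props psi_vbar_upd_in_P by blast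

lemma adj_fibre: "y \<in> verts (Gs i0) \<Longrightarrow> y' \<in> verts (Gs i0) \<Longrightarrow> adj H (fibre y) (fibre y') \<longleftrightarrow> adj (Gs i0) y y'"
  using psi_adj fibre_props adj_psi_vbar_upd by metis

lemma fibre_layer_step:
  assumes x: "x \<in> verts (Gs i0)" and y: "y \<in> verts (Gs i0)" and a: "adj (Gs i0) x y" and layer: "fibre x \<in> layer"
  shows "fibre y \<in> layer"
proof -
  have aH: "adj H (fibre x) (fibre y)" using adj_fibre x y a by blast
  have c: "edge_coord (fibre x) (fibre y) = i0"
  proof (rule ccontr)
    assume "edge_coord (fibre x) (fibre y) \<noteq> i0"
    then have "\<psi> (fibre x) (edge_coord (fibre x) (fibre y)) = \<psi> (fibre y) (edge_coord (fibre x) (fibre y))" using fibre_props x y by simp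
    then show False using edge_coord_props(2)[OF aH] by simp
  qed
  obtain u where u: "adj G v u" "edge_coord (fibre x) (fibre y) = class_coord (star_class u)"
    "(labelH (fibre y) = insert u (labelH (fibre x)) \<and> u \<notin> labelH (fibre x)) \<or> (labelH (fibre x) = insert u (labelH (fibre y)) \<and> u \<notin> labelH (fibre y))"
    using adj_H_class_coord[OF aH] by blast
  have uA: "star_class u \<in> merged" using u c star_class_in_C by (auto simp: merged_def)
  have sub: "labelH (fibre y) \<subseteq> insert u (labelH (fibre x))" using u(3) by blast
  have "star_class ` labelH (fibre x) \<subseteq> merged" using layer_iff_labelH layer fibre_props x by blast
  then have "star_class ` labelH (fibre y) \<subseteq> merged" using sub uA by blast
  then show ?thesis using layer_iff_labelH fibre_props y by blast
qed

lemma fibre_walk_layer: "walk (Gs i0) p \<Longrightarrow> fibre (hd p) \<in> layer \<Longrightarrow> fibre (last p) \<in> layer"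
proof (induction p rule: induct_list012)
  case 1 then show ?case by (simp add: walk_def)
next
  case (2 x) then show ?case by simp
next
  case (3 x y zs)
  have w: "walk (Gs i0) (y # zs)" "adj (Gs i0) x y" using 3(3) by (auto simp: walk_Cons_Cons_iff)
  have fx: "fibre x \<in> layer" using 3(4) by simp
  have "fibre y \<in> layer" using fibre_layer_step[of x y] adj_Gs_i0_verts[OF w(2)] w(2) fx by blast
  then show ?case using 3(2)[OF w(1)] by simp
qed

lemma fibre_in_layer: "y \<in> verts (Gs i0) \<Longrightarrow> fibre y \<in> layer"
proof -
  assume y: "y \<in> verts (Gs i0)"
  have Oi: "psi_vbar i0 \<in> verts (Gs i0)" using psi_vbar_in_P i0_in_I by (auto simp: PiE_iff)
  have "connected_graph (Gs i0)" using prime_Gs_i0 by (simp add: prime_graph_def)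
  then have "dist (Gs i0) (psi_vbar i0) y \<noteq> \<infinity>" using Oi y by (simp add: connected_graph_def)
  from walk_if_dist_finite[OF this] obtain p where p: "walk (Gs i0) p" "hd p = psi_vbar i0" "last p = y" by blast
  have "fibre (psi_vbar i0) = vbar" unfolding fibre_def fun_upd_triv using psi_inv_psi[OF vbar_in_H] .
  then have "fibre (hd p) \<in> layer" using p(2) vbar_in_layer by simp
  then have "fibre (last p) \<in> layer" using fibre_walk_layer p(1) by blast
  then show ?thesis using p(3) by simp
qed

lemma bij_fibre_layer: "bij_betw fibre (verts (Gs i0)) layer"
  unfolding bij_betw_def
proof
  show "inj_on fibre (verts (Gs i0))"
  proof (rule inj_onI)
    fix y y' assume yy: "y \<in> verts (Gs i0)" "y' \<in> verts (Gs i0)" "fibre y = fibre y'"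
    then have "psi_vbar(i0 := y) = psi_vbar(i0 := y')" using fibre_props by metis
    then show "y = y'" by (metis fun_upd_same)
  qed
  show "fibre ` verts (Gs i0) = layer"
  proof
    show "fibre ` verts (Gs i0) \<subseteq> layer" using fibre_in_layer by blast
    show "layer \<subseteq> fibre ` verts (Gs i0)"
    proof
      fix a assume a: "a \<in> layer"
      have aH: "a \<in> verts H" using layer_in_H a .
      have y: "\<psi> a i0 \<in> verts (Gs i0)" using psi_P[OF aH] i0_in_I by (auto simp: PiE_iff)
      have "fibre (\<psi> a i0) = a" unfolding fibre_def using psi_layer_eq_upd[OF a] psi_inv_psi[OF aH] by simp
      then show "a \<in> fibre ` verts (Gs i0)" using y by (metis image_eqI)
    qed
  qed
qed


abbreviation "G1 \<equiv> cart_prod {\<phi>1} sf"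
abbreviation "G2 \<equiv> cart_prod (merged - {\<phi>1}) sf"
abbreviation "GG \<equiv> (\<lambda>n::nat. if n = 0 then G1 else G2)"
abbreviation "P2 \<equiv> cart_prod {0::nat, 1} GG"
abbreviation "Vs \<equiv> (\<lambda>\<phi>. insert v (N_phi \<phi> v))"
definition split_layer :: "('a set set \<Rightarrow> 'a) \<Rightarrow> nat \<Rightarrow> ('a set set \<Rightarrow> 'a)" where
  "split_layer a = (\<lambda>n\<in>{0::nat, 1}. if n = 0 then restrict a {\<phi>1} else restrict a (merged - {\<phi>1}))"

lemma verts_G1: "verts G1 = PiE {\<phi>1} Vs" by (simp add: verts_cart_prod verts_star_factor)
lemma verts_G2: "verts G2 = PiE (merged - {\<phi>1}) Vs" by (simp add: verts_cart_prod verts_star_factor)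
lemma verts_P2: "verts P2 = PiE {0::nat, 1} (\<lambda>n. if n = 0 then PiE {\<phi>1} Vs else PiE (merged - {\<phi>1}) Vs)"
proof -
  have "\<And>n. verts (GG n) = (if n = 0 then PiE {\<phi>1} Vs else PiE (merged - {\<phi>1}) Vs)" using verts_G1 verts_G2 by simp
  then show ?thesis by (simp add: verts_cart_prod)
qed

lemma split_layer_0: "split_layer a 0 = restrict a {\<phi>1}" by (simp add: split_layer_def)
lemma split_layer_1: "split_layer a 1 = restrict a (merged - {\<phi>1})" by (simp add: split_layer_def)

lemma split_layer_in_P2: "a \<in> layer \<Longrightarrow> split_layer a \<in> verts P2"
proof -
  assume a: "a \<in> layer"
  then have aV: "a \<in> PiE C Vs" using layer_in_H verts_H by blast
  have "restrict a {\<phi>1} \<in> PiE {\<phi>1} Vs" using aV p1 by (auto simp: PiE_iff)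
  moreover have "restrict a (merged - {\<phi>1}) \<in> PiE (merged - {\<phi>1}) Vs" using aV merged_subset_C by (auto simp: PiE_iff)
  ultimately show ?thesis unfolding verts_P2 by (auto simp: split_layer_def PiE_iff)
qed

lemma inj_on_split_layer: "inj_on split_layer layer"
proof (rule inj_onI)
  fix a b assume ab: "a \<in> layer" "b \<in> layer" "split_layer a = split_layer b"
  have "restrict a {\<phi>1} = restrict b {\<phi>1}" using ab(3) split_layer_0 by metis
  then have a1: "a \<phi>1 = b \<phi>1" unfolding restrict_eq_iff by simp
  have "restrict a (merged - {\<phi>1}) = restrict b (merged - {\<phi>1})" using ab(3) split_layer_1 by metis
  then have a2: "\<forall>\<phi>\<in>merged - {\<phi>1}. a \<phi> = b \<phi>" unfolding restrict_eq_iff .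
  have a3: "\<forall>\<phi>\<in>C - merged. a \<phi> = b \<phi>" using ab(1,2) by (simp add: layer_def)
  show "a = b"
  proof (rule PiE_ext[of a C Vs b])
    show "a \<in> PiE C Vs" "b \<in> PiE C Vs" using ab layer_in_H verts_H by blast+
    fix \<phi> assume "\<phi> \<in> C"
    then show "a \<phi> = b \<phi>" using a1 a2 a3 by (cases "\<phi> = \<phi>1") auto
  qed
qed

lemma verts_P2_subset_split_layer: "verts P2 \<subseteq> split_layer ` layer"
proof
  fix g assume g: "g \<in> verts P2"
  have g0: "g 0 \<in> PiE {\<phi>1} Vs" and g1: "g 1 \<in> PiE (merged - {\<phi>1}) Vs"
    using g unfolding verts_P2 by (auto simp: PiE_iff)
  define a where "a = (\<lambda>\<phi>\<in>C. if \<phi> = \<phi>1 then g 0 \<phi>1 else if \<phi> \<in> merged then g 1 \<phi> else v)"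
  have aH: "a \<in> verts H" unfolding verts_H a_def using g0 g1 by (auto simp: PiE_iff)
  have aL: "a \<in> layer" using aH merged_phis by (auto simp: layer_def a_def)
  have "restrict a {\<phi>1} = restrict (g 0) {\<phi>1}" unfolding restrict_eq_iff using p1 by (simp add: a_def)
  then have r0: "restrict a {\<phi>1} = g 0" using PiE_restrict[OF g0] by simp
  have "restrict a (merged - {\<phi>1}) = restrict (g 1) (merged - {\<phi>1})"
    unfolding restrict_eq_iff using merged_subset_C by (auto simp: a_def)
  then have r1: "restrict a (merged - {\<phi>1}) = g 1" using PiE_restrict[OF g1] by simp
  have "split_layer a = g"
  proof (rule PiE_ext[OF split_layer_in_P2[OF aL, unfolded verts_P2] g[unfolded verts_P2]])
    fix n :: nat assume "n \<in> {0, 1}"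
    then show "split_layer a n = g n" using r0 r1 split_layer_0 split_layer_1 by auto
  qed
  then show "g \<in> split_layer ` layer" using aL by blast
qed

lemma bij_split_layer: "bij_betw split_layer layer (verts P2)"
proof -
  have "split_layer ` layer \<subseteq> verts P2" using split_layer_in_P2 by blast
  then show ?thesis unfolding bij_betw_def
    using inj_on_split_layer verts_P2_subset_split_layer by (intro conjI subset_antisym)
qed

lemma adj_H_iff_star: "adj H a b \<longleftrightarrow> a \<in> PiE C Vs \<and> b \<in> PiE C Vs \<and>
   (\<exists>\<phi>\<in>C. adj (sf \<phi>) (a \<phi>) (b \<phi>) \<and> (\<forall>\<psi>\<in>C. \<psi> \<noteq> \<phi> \<longrightarrow> a \<psi> = b \<psi>))"
  unfolding adj_cart_prod_iff by (simp add: verts_star_factor)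

lemma adj_P2_split_layer_iff:
  assumes a: "a \<in> layer" and b: "b \<in> layer"
  shows "adj P2 (split_layer a) (split_layer b) \<longleftrightarrow>
    (adj (sf \<phi>1) (a \<phi>1) (b \<phi>1) \<and> (\<forall>\<psi>\<in>merged - {\<phi>1}. a \<psi> = b \<psi>)) \<or>
    ((\<exists>\<phi>\<in>merged - {\<phi>1}. adj (sf \<phi>) (a \<phi>) (b \<phi>) \<and> (\<forall>\<psi>\<in>merged - {\<phi>1}. \<psi> \<noteq> \<phi> \<longrightarrow> a \<psi> = b \<psi>))
      \<and> a \<phi>1 = b \<phi>1)"
proof -
  have aV: "a \<in> PiE C Vs" "b \<in> PiE C Vs" using a b layer_in_H verts_H by blast+
  have sP: "split_layer a \<in> PiE {0::nat, 1} (\<lambda>n. verts (GG n))" "split_layer b \<in> PiE {0::nat, 1} (\<lambda>n. verts (GG n))"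
    using split_layer_in_P2 a b by (simp_all add: verts_cart_prod)
  have r0V: "restrict a {\<phi>1} \<in> PiE {\<phi>1} (\<lambda>i. verts (sf i))" "restrict b {\<phi>1} \<in> PiE {\<phi>1} (\<lambda>i. verts (sf i))"
    using aV p1 by (auto simp: PiE_iff verts_star_factor)
  have r1V: "restrict a (merged - {\<phi>1}) \<in> PiE (merged - {\<phi>1}) (\<lambda>i. verts (sf i))"
    "restrict b (merged - {\<phi>1}) \<in> PiE (merged - {\<phi>1}) (\<lambda>i. verts (sf i))"
    using aV merged_subset_C by (auto simp: PiE_iff verts_star_factor)
  have "adj G1 (split_layer a 0) (split_layer b 0) \<longleftrightarrow> adj (sf \<phi>1) (a \<phi>1) (b \<phi>1)"
    unfolding split_layer_0 adj_cart_prod_singleton_iff using r0V by simp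
  moreover have "adj G2 (split_layer a 1) (split_layer b 1) \<longleftrightarrow>
     (\<exists>\<phi>\<in>merged - {\<phi>1}. adj (sf \<phi>) (a \<phi>) (b \<phi>) \<and> (\<forall>\<psi>\<in>merged - {\<phi>1}. \<psi> \<noteq> \<phi> \<longrightarrow> a \<psi> = b \<psi>))"
    unfolding split_layer_1 adj_cart_prod_iff using r1V by simp
  moreover have "split_layer a 0 = split_layer b 0 \<longleftrightarrow> a \<phi>1 = b \<phi>1"
    unfolding split_layer_0 restrict_eq_iff by simp
  moreover have "split_layer a 1 = split_layer b 1 \<longleftrightarrow> (\<forall>\<psi>\<in>merged - {\<phi>1}. a \<psi> = b \<psi>)"
    unfolding split_layer_1 restrict_eq_iff by simp
  moreover have "adj P2 (split_layer a) (split_layer b) \<longleftrightarrow>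
     (adj G1 (split_layer a 0) (split_layer b 0) \<and> split_layer a 1 = split_layer b 1) \<or>
     (adj G2 (split_layer a 1) (split_layer b 1) \<and> split_layer a 0 = split_layer b 0)"
    using adj_cart_prod_iff[of "{0::nat, 1}" GG "split_layer a" "split_layer b"] sP by auto
  ultimately show ?thesis by simp
qed

lemma adj_split_layer:
  assumes a: "a \<in> layer" and b: "b \<in> layer"
  shows "adj H a b \<longleftrightarrow> adj P2 (split_layer a) (split_layer b)"
  unfolding adj_P2_split_layer_iff[OF assms]
proof
  have outA: "\<psi> \<in> C \<Longrightarrow> \<psi> \<notin> merged \<Longrightarrow> a \<psi> = v \<and> b \<psi> = v" for \<psi> using a b by (simp add: layer_def)
  assume "adj H a b"
  then obtain \<phi> where p: "\<phi> \<in> C" "adj (sf \<phi>) (a \<phi>) (b \<phi>)" "\<forall>\<psi>\<in>C. \<psi> \<noteq> \<phi> \<longrightarrow> a \<psi> = b \<psi>"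
    unfolding adj_H_iff_star by blast
  moreover have "\<phi> \<in> merged" using outA p by (metis adj_def)
  ultimately show "(adj (sf \<phi>1) (a \<phi>1) (b \<phi>1) \<and> (\<forall>\<psi>\<in>merged - {\<phi>1}. a \<psi> = b \<psi>)) \<or>
    ((\<exists>\<phi>\<in>merged - {\<phi>1}. adj (sf \<phi>) (a \<phi>) (b \<phi>) \<and> (\<forall>\<psi>\<in>merged - {\<phi>1}. \<psi> \<noteq> \<phi> \<longrightarrow> a \<psi> = b \<psi>))
      \<and> a \<phi>1 = b \<phi>1)"
    using merged_subset_C p1 by (cases "\<phi> = \<phi>1") blast+
next
  have outA: "\<psi> \<in> C \<Longrightarrow> \<psi> \<notin> merged \<Longrightarrow> a \<psi> = b \<psi>" for \<psi> using a b by (simp add: layer_def)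
  have aV: "a \<in> PiE C Vs" "b \<in> PiE C Vs" using a b layer_in_H verts_H by blast+
  assume "(adj (sf \<phi>1) (a \<phi>1) (b \<phi>1) \<and> (\<forall>\<psi>\<in>merged - {\<phi>1}. a \<psi> = b \<psi>)) \<or>
    ((\<exists>\<phi>\<in>merged - {\<phi>1}. adj (sf \<phi>) (a \<phi>) (b \<phi>) \<and> (\<forall>\<psi>\<in>merged - {\<phi>1}. \<psi> \<noteq> \<phi> \<longrightarrow> a \<psi> = b \<psi>))
      \<and> a \<phi>1 = b \<phi>1)"
  then obtain \<phi> where "\<phi> \<in> merged" "adj (sf \<phi>) (a \<phi>) (b \<phi>)" "\<forall>\<psi>\<in>merged. \<psi> \<noteq> \<phi> \<longrightarrow> a \<psi> = b \<psi>"
    using merged_phis(1) by blast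
  then show "adj H a b" unfolding adj_H_iff_star using aV outA merged_subset_C by blast
qed

lemma merged_classes_False: False
proof -
  let ?T = "\<lambda>y. split_layer (fibre y)"
  have "bij_betw ?T (verts (Gs i0)) (verts P2)"
    using bij_betw_trans[OF bij_fibre_layer bij_split_layer] by (simp add: comp_def)
  moreover have "\<forall>x\<in>verts (Gs i0). \<forall>y\<in>verts (Gs i0). adj (Gs i0) x y = adj P2 (?T x) (?T y)"
    using adj_fibre adj_split_layer fibre_in_layer by metis
  ultimately have iso: "isomorphic (Gs i0) P2" unfolding isomorphic_def graph_iso_def by blast
  have fin: "finite (merged - {\<phi>1})" using merged_subset_C finite_C by (meson finite_Diff finite_subset)
  have sub: "{\<phi>1} \<subseteq> C" "merged - {\<phi>1} \<subseteq> C" using p1 merged_subset_C by auto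
  have "\<phi>2 \<in> merged - {\<phi>1}" using merged_phis ne12 by auto
  then have c: "card (verts G1) \<noteq> 1" "card (verts G2) \<noteq> 1"
    using card_verts_star_product_ne_1[OF sub(1)] card_verts_star_product_ne_1[OF sub(2) fin] by simp_all
  have s: "simple_graph G1" "simple_graph G2"
    using simple_star_product[OF sub(1)] simple_star_product[OF sub(2) fin] by simp_all
  show False using prime_Gs_i0 s iso c unfolding prime_graph_def by blast
qed

end

context H_PFD
begin

lemma inj_on_class_coord: "inj_on class_coord C"
proof (rule inj_onI, rule ccontr)
  fix \<phi>1 \<phi>2 assume a: "\<phi>1 \<in> C" "\<phi>2 \<in> C" "class_coord \<phi>1 = class_coord \<phi>2" "\<phi>1 \<noteq> \<phi>2"
  interpret merged_classes G v I Gs \<psi> \<phi>1 \<phi>2 by unfold_locales (use a in auto)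
  show False by (rule merged_classes_False)
qed

lemma card_coord_rel_quotient: "card (edges H // coord_rel H I \<psi>) = card C"
  using card_coord_rel_quotient_if_inj inj_on_class_coord by blast

end

theorem theorem3p7:
  fixes G :: "'a graph" and v :: 'a
  assumes "simple_graph G" and "v \<in> verts G"
  defines "H \<equiv> cart_prod (star_classes G v) (\<lambda>\<phi>. star_factor \<phi> v)"
    and "vbar \<equiv> (\<lambda>\<phi>\<in>star_classes G v. v)"
    and "S \<equiv> partial_star G v"
  shows "(\<exists>\<gamma>. graph_iso \<gamma> S (induced H (N2 H vbar)) \<and> \<gamma> v = vbar \<and>
            (\<forall>\<phi>\<in>star_classes G v. \<forall>u\<in>N_phi \<phi> v. \<gamma> u = vbar(\<phi> := u)) \<and>
            isometric_emb \<gamma> S H \<and>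
            {(\<gamma> ` e, \<gamma> ` f) | e f. (e, f) \<in> d_restr G v} \<subseteq> (delta H)\<^sup>+ \<and>
            (delta H)\<^sup>+ \<subseteq> sigma H) \<and>
         card (edges H // sigma H) = card (edges S // d_restr G v)"
proof -
  interpret pointed_graph G v using assms(1) by unfold_locales
  obtain I Gs \<psi> where pfd: "is_PFD H I Gs \<psi>" and sig: "sigma H = coord_rel H I \<psi>"
    using sigma_eq_coord_rel is_PFD_exists unfolding H_def by blast
  interpret H_PFD G v I Gs \<psi> using pfd unfolding H_def by unfold_locales
  have "graph_iso gamma S (induced H (N2 H vbar)) \<and> gamma v = vbar \<and>
      (\<forall>\<phi>\<in>star_classes G v. \<forall>u\<in>N_phi \<phi> v. gamma u = vbar(\<phi> := u)) \<and>
      isometric_emb gamma S H \<and>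
      {(gamma ` e, gamma ` f) | e f. (e, f) \<in> d_restr G v} \<subseteq> (delta H)\<^sup>+ \<and>
      (delta H)\<^sup>+ \<subseteq> sigma H"
    using gamma_isometric_iso gamma_d_restr_subset_trancl trancl_delta_subset_coord_rel sig
    unfolding H_def vbar_def S_def by simp
  moreover have "card (edges H // sigma H) = card (edges S // d_restr G v)"
    using card_coord_rel_quotient card_d_restr_quotient sig unfolding H_def S_def by simp
  ultimately show ?thesis by blast
qed

end
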